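(* Let $L$ and $f$ be as in the context and assume (F-1$'$), (F-2$'$), (F-3), (F-4a) and (L-1) hold, and that the function $G$ of (F-4a) satisfies $G(u)<0$ for all $u>0$. Then the stationary equation (1.3) has no solution other than $W\equiv0$. In particular this conclusion holds whenever $f(x,\cdot)$ is concave for each $x$, $F(u)<0$ for all $u>0$, and (F-2$'$), (F-3), (L-1) hold.
   Context: Let $L=\sum_{i,j=1}^n a_{ij}(x)\frac{\partial^2}{\partial x_i\partial x_j}+\sum_{i=1}^n b_i(x)\frac{\partial}{\partial x_i}$ with $a_{ij},b_i\in C^{\alpha}(\mathbb{R}^n)$ and $\sum_{i,j}a_{ij}(x)\nu_i\nu_j>0$ for all $x\in\mathbb{R}^n$, $\nu\in\mathbb{R}^n\setminus\{0\}$. Let $f:\mathbb{R}^n\times[0,\infty)\to\mathbb{R}$ be locally Lipschitz in $x$ and in $u$. The stationary equation (1.3): $LW+f(x,W)=0$ in $\mathbb{R}^n$, $W\ge0$, $W\in C^2(\mathbb{R}^n)$. Let $F(u)=\sup_{x\in\mathbb{R}^n}f(x,u)$ and let $\log^{(i)}$ be the $i$-th iterate of $\log$, with $\prod_{i=1}^0\log^{(i)}u=1$. (F-1$'$): $\sup_{u>0}F(u)<\infty$. (F-2$'$): there exist an integer $m\ge0$ and $\epsilon>0$ with $\lim_{u\to\infty}\frac{F(u)}{u(\prod_{i=1}^m\log^{(i)}u)^2(\log^{(m+1)}u)^{2+\epsilon}}=-\infty$. (F-3): $f(x,0)=0$ for all $x$, and $F$ is locally Lipschitz. (F-4a): the function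 $G(u)=\sup_{x\in\mathbb{R}^n}\sup_{v\ge u}\big(f(x,v)-f(x,v-u)\big)$ is locally Lipschitz, is negative for all sufficiently large $u$, and satisfies $\int^\infty\frac{du}{-G(u)}<\infty$. (L-1): there is $C>0$ with $\sum_{i,j}a_{ij}(x)\nu_i\nu_j\le C|\nu|^2(1+|x|^2)$ for all $x,\nu$ and $|b(x)|\le C(1+|x|)$, where $b=(b_1,\dots,b_n)$. *)

theory Defs
  imports "HOL-Analysis.Analysis"
begin

definition pd1 :: "(real^'n \<Rightarrow> real) \<Rightarrow> 'n \<Rightarrow> real^'n \<Rightarrow> real" where
  "pd1 W i x = frechet_derivative W (at x) (axis i 1)"

definition pd2 :: "(real^'n \<Rightarrow> real) \<Rightarrow> 'n \<Rightarrow> 'n \<Rightarrow> real^'n \<Rightarrow> real" where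
  "pd2 W i j x = frechet_derivative (\<lambda>y. pd1 W j y) (at x) (axis i 1)"

definition C2 :: "(real^'n \<Rightarrow> real) \<Rightarrow> bool" where
  "C2 W \<longleftrightarrow> (\<forall>x. W differentiable (at x)) \<and>
              (\<forall>j x. (pd1 W j) differentiable (at x)) \<and>
              (\<forall>i j. continuous_on UNIV (pd2 W i j))"

definition Lop :: "(real^'n \<Rightarrow> 'n \<Rightarrow> 'n \<Rightarrow> real) \<Rightarrow> (real^'n \<Rightarrow> real^'n)
                    \<Rightarrow> (real^'n \<Rightarrow> real) \<Rightarrow> real^'n \<Rightarrow> real" where
  "Lop a b W x = (\<Sum>i\<in>UNIV. \<Sum>j\<in>UNIV. a x i j * pd2 W i j x) + (\<Sum>i\<in>UNIV. b x $ i * pd1 W i x)"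

definition holder :: "real \<Rightarrow> (real^'n \<Rightarrow> real) \<Rightarrow> bool" where
  "holder \<alpha> g \<longleftrightarrow> (\<forall>K. compact K \<longrightarrow> (\<exists>C. \<forall>x\<in>K. \<forall>y\<in>K. \<bar>g x - g y\<bar> \<le> C * dist x y powr \<alpha>))"

definition loc_lipschitz :: "'a::metric_space set \<Rightarrow> ('a \<Rightarrow> 'b::metric_space) \<Rightarrow> bool" where
  "loc_lipschitz S g \<longleftrightarrow> (\<forall>x\<in>S. \<exists>e>0. \<exists>C. C-lipschitz_on (cball x e \<inter> S) g)"

definition Fsup :: "(real^'n \<Rightarrow> real \<Rightarrow> real) \<Rightarrow> real \<Rightarrow> real" where
  "Fsup f u = (SUP x. f x u)"

definition Gsup :: "(real^'n \<Rightarrow> real \<Rightarrow> real) \<Rightarrow> real \<Rightarrow> real" where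
  "Gsup f u = (SUP p\<in>{(x,v). v \<ge> u}. f (fst p) (snd p) - f (fst p) (snd p - u))"

definition F1' :: "(real^'n \<Rightarrow> real \<Rightarrow> real) \<Rightarrow> bool" where
  "F1' f \<longleftrightarrow> bdd_above (Fsup f ` {0<..})"

definition F2' :: "(real^'n \<Rightarrow> real \<Rightarrow> real) \<Rightarrow> bool" where
  "F2' f \<longleftrightarrow> (\<exists>(m::nat) (\<epsilon>::real). \<epsilon> > 0 \<and>
     filterlim (\<lambda>u. Fsup f u / (u * (\<Prod>i=1..m. (ln ^^ i) u)^2 * ((ln ^^ (m+1)) u) powr (2+\<epsilon>)))
       at_bot at_top)"

definition F3 :: "(real^'n \<Rightarrow> real \<Rightarrow> real) \<Rightarrow> bool" where
  "F3 f \<longleftrightarrow> (\<forall>x. f x 0 = 0) \<and> loc_lipschitz {0..} (Fsup f)"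

definition F4a :: "(real^'n \<Rightarrow> real \<Rightarrow> real) \<Rightarrow> bool" where
  "F4a f \<longleftrightarrow> loc_lipschitz {0..} (Gsup f) \<and>
     (\<exists>u0. (\<forall>u\<ge>u0. Gsup f u < 0) \<and> (\<lambda>u. 1 / (- Gsup f u)) integrable_on {u0..})"

definition L1 :: "(real^'n \<Rightarrow> 'n \<Rightarrow> 'n \<Rightarrow> real) \<Rightarrow> (real^'n \<Rightarrow> real^'n) \<Rightarrow> bool" where
  "L1 a b \<longleftrightarrow> (\<exists>C>0. \<forall>x \<nu>. (\<Sum>i\<in>UNIV. \<Sum>j\<in>UNIV. a x i j * \<nu>$i * \<nu>$j) \<le> C * (norm \<nu>)^2 * (1 + (norm x)^2)
                        \<and> norm (b x) \<le> C * (1 + norm x))"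

definition stat_sol :: "(real^'n \<Rightarrow> 'n \<Rightarrow> 'n \<Rightarrow> real) \<Rightarrow> (real^'n \<Rightarrow> real^'n)
                        \<Rightarrow> (real^'n \<Rightarrow> real \<Rightarrow> real) \<Rightarrow> (real^'n \<Rightarrow> real) \<Rightarrow> bool" where
  "stat_sol a b f W \<longleftrightarrow> C2 W \<and> (\<forall>x. W x \<ge> 0) \<and> (\<forall>x. Lop a b W x + f x (W x) = 0)"

end

theory Submission
  imports Defs
begin

(* Both parts reduce to one statement: if F(u) < 0 for u > 0 and (F-2'), (F-3), (L-1) hold, every
   nonnegative C^2 solution W of L W + f(x, W) = 0 vanishes.  In the first part F <= G because
   f(x, 0) = 0.

   The tool is a maximum principle at infinity.  For Q increasing with Q(W) bounded above,
   Q(W) - eta log(1 + |x|^2) attains its maximum at some z.  There the gradients of Q(W) and of the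
   penalty agree, and nonnegativity of (a_ij) against the second order condition gives
     Q'(W) L W <= eta K + |Q''(W)| 4 C eta^2 / Q'(W)^2,   while   L W >= -F(W).
   With Q = -(log^(m+1) W)^(-eps/2), (F-2') makes Q'(W) (-F(W)) dominate the right hand side for
   small eta, so W is bounded.  Then Q = id and F <= -delta < 0 on [W(x0)/2, sup W] give
   delta <= eta K for all small eta, so W = 0. *)

lemma frechet_derivative_eq_sum_pd1:
  fixes U :: "real^'n \<Rightarrow> real"
  assumes "U differentiable (at y)"
  shows "frechet_derivative U (at y) v = (\<Sum>i\<in>UNIV. v$i * pd1 U i y)"
proof -
  have lin: "linear (frechet_derivative U (at y))"
    using assms linear_frechet_derivative by blast
  have "frechet_derivative U (at y) v = frechet_derivative U (at y) (\<Sum>i\<in>UNIV. v$i *\<^sub>R axis i 1)"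
    using basis_expansion[of v] by (simp add: scalar_mult_eq_scaleR)
  also have "\<dots> = (\<Sum>i\<in>UNIV. v$i * frechet_derivative U (at y) (axis i 1))"
    by (simp add: linear_sum[OF lin] linear_cmul[OF lin])
  finally show ?thesis by (simp add: pd1_def)
qed

lemma has_real_derivative_along_line:
  fixes U :: "real^'n \<Rightarrow> real"
  assumes "U differentiable (at (z + t *\<^sub>R v))"
  shows "((\<lambda>s. U (z + s *\<^sub>R v)) has_real_derivative (\<Sum>i\<in>UNIV. v$i * pd1 U i (z + t *\<^sub>R v))) (at t)"
proof -
  let ?U' = "frechet_derivative U (at (z + t *\<^sub>R v))"
  have "(U has_derivative ?U') (at (z + t *\<^sub>R v))"
    using assms frechet_derivative_works by blast
  moreover have "((\<lambda>s. z + s *\<^sub>R v) has_derivative (\<lambda>s. s *\<^sub>R v)) (at t)"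
    by (auto intro!: derivative_eq_intros)
  ultimately have "((\<lambda>s. U (z + s *\<^sub>R v)) has_derivative (\<lambda>s. ?U' (s *\<^sub>R v))) (at t)"
    using diff_chain_at unfolding o_def by blast
  moreover have "(\<lambda>s. ?U' (s *\<^sub>R v)) = (*) (?U' v)"
    using linear_cmul[OF linear_frechet_derivative[OF assms]] by (auto simp: fun_eq_iff)
  ultimately show ?thesis
    using frechet_derivative_eq_sum_pd1[OF assms] by (simp add: has_field_derivative_def)
qed

lemma sum_axis_mult: "(\<Sum>k\<in>UNIV. axis j (1::real) $ k * c k) = c j"
proof -
  have "(\<Sum>k\<in>UNIV. axis j (1::real) $ k * c k) = (\<Sum>k\<in>UNIV. if k = j then c k else 0)"
    by (intro sum.cong refl) (simp add: axis_def)
  then show ?thesis by simp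
qed

lemma pd2_eq_pd1_pd1: "pd2 W i j x = pd1 (pd1 W j) i x"
  unfolding pd2_def by (rule pd1_def[symmetric])

lemma has_real_derivative_along_axis:
  fixes U :: "real^'n \<Rightarrow> real"
  assumes "U differentiable (at (z + t *\<^sub>R axis j 1))"
  shows "((\<lambda>s. U (z + s *\<^sub>R axis j 1)) has_real_derivative pd1 U j (z + t *\<^sub>R axis j 1)) (at t)"
  using has_real_derivative_along_line[OF assms] by (simp add: sum_axis_mult)

lemma has_real_derivative_along_line_second:
  fixes U :: "real^'n \<Rightarrow> real"
  assumes "\<And>j. pd1 U j differentiable (at (z + t *\<^sub>R v))"
  shows "((\<lambda>s. \<Sum>j\<in>UNIV. v$j * pd1 U j (z + s *\<^sub>R v)) has_real_derivative
           (\<Sum>i\<in>UNIV. \<Sum>j\<in>UNIV. pd2 U i j (z + t *\<^sub>R v) * v$i * v$j)) (at t)"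
proof -
  have "((\<lambda>s. v$j * pd1 U j (z + s *\<^sub>R v)) has_real_derivative
          (\<Sum>i\<in>UNIV. pd2 U i j (z + t *\<^sub>R v) * v$i * v$j)) (at t)" for j
    using DERIV_cmult[OF has_real_derivative_along_line[OF assms[of j]], of "v$j"]
    by (simp add: pd2_eq_pd1_pd1 sum_distrib_left mult_ac)
  then have "((\<lambda>s. \<Sum>j\<in>UNIV. v$j * pd1 U j (z + s *\<^sub>R v)) has_real_derivative
           (\<Sum>j\<in>UNIV. \<Sum>i\<in>UNIV. pd2 U i j (z + t *\<^sub>R v) * v$i * v$j)) (at t)"
    by (intro DERIV_sum) auto
  then show ?thesis by (subst sum.swap)
qed

lemma second_difference_mvt:
  fixes W :: "real^'n \<Rightarrow> real"
  assumes dW: "\<And>y. W differentiable (at y)" and dP: "\<And>y. pd1 W j differentiable (at y)" and h: "0 < h"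
  obtains \<xi> where "dist \<xi> x \<le> 2 * h"
    "W (x + h *\<^sub>R axis i 1 + h *\<^sub>R axis j 1) - W (x + h *\<^sub>R axis i 1) - W (x + h *\<^sub>R axis j 1) + W x
       = h * h * pd2 W i j \<xi>"
proof -
  define ei :: "real^'n" where "ei = axis i 1"
  define ej :: "real^'n" where "ej = axis j 1"
  define \<phi> where "\<phi> s = W (x + h *\<^sub>R ei + s *\<^sub>R ej) - W (x + s *\<^sub>R ej)" for s
  have "(\<phi> has_real_derivative (pd1 W j (x + h *\<^sub>R ei + s *\<^sub>R ej) - pd1 W j (x + s *\<^sub>R ej))) (at s)" for s
    unfolding \<phi>_def ej_def by (intro derivative_intros has_real_derivative_along_axis dW)
  then obtain s where s: "0 < s" "s < h"
    "\<phi> h - \<phi> 0 = (h - 0) * (pd1 W j (x + h *\<^sub>R ei + s *\<^sub>R ej) - pd1 W j (x + s *\<^sub>R ej))"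
    using MVT2[OF h, of \<phi> "\<lambda>s. pd1 W j (x + h *\<^sub>R ei + s *\<^sub>R ej) - pd1 W j (x + s *\<^sub>R ej)"]
    by blast
  define \<rho> where "\<rho> r = pd1 W j (x + s *\<^sub>R ej + r *\<^sub>R ei)" for r
  have "(\<rho> has_real_derivative pd2 W i j (x + s *\<^sub>R ej + r *\<^sub>R ei)) (at r)" for r
    unfolding \<rho>_def pd2_eq_pd1_pd1 ei_def by (rule has_real_derivative_along_axis[OF dP])
  then obtain r where r: "0 < r" "r < h" "\<rho> h - \<rho> 0 = (h - 0) * pd2 W i j (x + s *\<^sub>R ej + r *\<^sub>R ei)"
    using MVT2[OF h, of \<rho> "\<lambda>r. pd2 W i j (x + s *\<^sub>R ej + r *\<^sub>R ei)"] by blast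
  show ?thesis
  proof
    have "dist (x + s *\<^sub>R ej + r *\<^sub>R ei) x \<le> norm (s *\<^sub>R ej) + norm (r *\<^sub>R ei)"
      using norm_triangle_ineq[of "s *\<^sub>R ej" "r *\<^sub>R ei"] by (simp add: dist_norm add.assoc)
    then show "dist (x + s *\<^sub>R ej + r *\<^sub>R ei) x \<le> 2 * h"
      using s r by (simp add: ei_def ej_def)
    have "\<rho> h = pd1 W j (x + h *\<^sub>R ei + s *\<^sub>R ej)" "\<rho> 0 = pd1 W j (x + s *\<^sub>R ej)"
      by (simp_all add: \<rho>_def add_ac)
    then show "W (x + h *\<^sub>R axis i 1 + h *\<^sub>R axis j 1) - W (x + h *\<^sub>R axis i 1) - W (x + h *\<^sub>R axis j 1) + W x
        = h * h * pd2 W i j (x + s *\<^sub>R ej + r *\<^sub>R ei)"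
      using s(3) r(3) by (simp add: \<phi>_def ei_def ej_def algebra_simps)
  qed
qed

lemma C2_D:
  assumes "C2 W"
  shows C2_differentiable: "W differentiable (at x)"
    and C2_pd1_differentiable: "pd1 W j differentiable (at x)"
  using assms by (simp_all add: C2_def)

lemma C2_continuous_on: "C2 W \<Longrightarrow> continuous_on UNIV W"
  using C2_differentiable
  by (auto intro!: differentiable_imp_continuous_on simp: differentiable_on_def differentiable_at_withinI)

lemma C2_along_line:
  fixes U :: "real^'n \<Rightarrow> real"
  assumes "C2 U"
  shows "((\<lambda>s. U (z + s *\<^sub>R v)) has_real_derivative (\<Sum>j\<in>UNIV. v$j * pd1 U j (z + t *\<^sub>R v))) (at t)"
    and "((\<lambda>s. \<Sum>j\<in>UNIV. v$j * pd1 U j (z + s *\<^sub>R v)) has_real_derivative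
           (\<Sum>i\<in>UNIV. \<Sum>j\<in>UNIV. pd2 U i j z * v$i * v$j)) (at 0)"
  using has_real_derivative_along_line[OF C2_differentiable[OF assms]]
    has_real_derivative_along_line_second[where t = 0, OF C2_pd1_differentiable[OF assms]]
  by simp_all

lemma pd2_symmetric:
  fixes W :: "real^'n \<Rightarrow> real"
  assumes "C2 W"
  shows "pd2 W i j x = pd2 W j i x"
proof (rule ccontr)
  assume ne: "pd2 W i j x \<noteq> pd2 W j i x"
  define e where "e = \<bar>pd2 W i j x - pd2 W j i x\<bar> / 2"
  have e: "e > 0" using ne by (simp add: e_def)
  have dW: "\<And>y. W differentiable (at y)" and dP: "\<And>j y. pd1 W j differentiable (at y)"
    and cP: "\<And>i j. continuous_on UNIV (pd2 W i j)"
    using assms unfolding C2_def by blast+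
  obtain d1 where d1: "d1 > 0" "\<And>y. dist y x < d1 \<Longrightarrow> dist (pd2 W i j y) (pd2 W i j x) < e"
    using cP[of i j] e unfolding continuous_on_iff by (meson UNIV_I)
  obtain d2 where d2: "d2 > 0" "\<And>y. dist y x < d2 \<Longrightarrow> dist (pd2 W j i y) (pd2 W j i x) < e"
    using cP[of j i] e unfolding continuous_on_iff by (meson UNIV_I)
  define h where "h = min d1 d2 / 4"
  have h: "h > 0" "2 * h < d1" "2 * h < d2" using d1 d2 by (auto simp: h_def)
  obtain \<xi> where \<xi>: "dist \<xi> x \<le> 2 * h"
    "W (x + h *\<^sub>R axis i 1 + h *\<^sub>R axis j 1) - W (x + h *\<^sub>R axis i 1) - W (x + h *\<^sub>R axis j 1) + W x
       = h * h * pd2 W i j \<xi>"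
    using second_difference_mvt[OF dW dP h(1)] .
  obtain \<xi>' where \<xi>': "dist \<xi>' x \<le> 2 * h"
    "W (x + h *\<^sub>R axis j 1 + h *\<^sub>R axis i 1) - W (x + h *\<^sub>R axis j 1) - W (x + h *\<^sub>R axis i 1) + W x
       = h * h * pd2 W j i \<xi>'"
    using second_difference_mvt[OF dW dP h(1)] .
  have swap: "x + h *\<^sub>R axis j 1 + h *\<^sub>R axis i 1 = x + h *\<^sub>R axis i 1 + h *\<^sub>R axis j 1"
    by (simp add: add_ac)
  have "h * h * pd2 W i j \<xi> = h * h * pd2 W j i \<xi>'"
    using \<xi>(2) \<xi>'(2) unfolding swap by linarith
  then have "pd2 W i j \<xi> = pd2 W j i \<xi>'" using h by simp
  moreover have "\<bar>pd2 W i j \<xi> - pd2 W i j x\<bar> < e" "\<bar>pd2 W j i \<xi>' - pd2 W j i x\<bar> < e"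
    using d1(2)[of \<xi>] d2(2)[of \<xi>'] \<xi>(1) \<xi>'(1) h by (simp_all add: dist_real_def)
  ultimately show False unfolding e_def by (auto simp: abs_real_def split: if_splits)
qed

section \<open>Positive semidefinite quadratic forms\<close>

lemma quadratic_nonneg_imp_discriminant_le:
  fixes c s r :: real
  assumes c: "0 \<le> c" and nonneg: "\<And>t. 0 \<le> c * t\<^sup>2 + 2 * s * t + r"
  shows "s\<^sup>2 \<le> c * r"
proof (cases "c = 0")
  case True
  have "s = 0"
  proof (rule ccontr)
    assume "s \<noteq> 0"
    then show False using nonneg[of "- (r + 1) / (2 * s)"] True by (simp add: field_simps)
  qed
  then show ?thesis using True by simp
next
  case False
  have "0 \<le> c * (- s / c)\<^sup>2 + 2 * s * (- s / c) + r" by (rule nonneg)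
  also have "\<dots> = (c * r - s\<^sup>2) / c" using False by (simp add: field_simps power2_eq_square)
  finally show ?thesis using c False by (simp add: zero_le_divide_iff)
qed

lemma quadratic_form_insert:
  fixes A :: "'a \<Rightarrow> 'a \<Rightarrow> real"
  assumes "finite J" "p \<notin> J" and sym: "\<And>i. i \<in> J \<Longrightarrow> A i p = A p i"
  shows "(\<Sum>i\<in>insert p J. \<Sum>j\<in>insert p J. A i j * v i * v j)
       = A p p * (v p)\<^sup>2 + 2 * (\<Sum>j\<in>J. A p j * v j) * v p + (\<Sum>i\<in>J. \<Sum>j\<in>J. A i j * v i * v j)"
proof -
  have "(\<Sum>i\<in>J. A i p * v i * v p) = (\<Sum>j\<in>J. A p j * v j) * v p"
    by (simp add: sum_distrib_right sym cong: sum.cong)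
  then show ?thesis
    using assms(1,2) by (simp add: sum.distrib sum_distrib_left sum_distrib_right power2_eq_square algebra_simps)
qed

text \<open>On the line \<open>v + t e\<^sub>p\<close> the form is a nonnegative quadratic polynomial in \<open>t\<close>.\<close>
lemma psd_form_pivot_bound:
  fixes A :: "'a \<Rightarrow> 'a \<Rightarrow> real"
  assumes J: "finite J" "p \<notin> J" and sym: "\<And>i. i \<in> J \<Longrightarrow> A i p = A p i"
    and psd: "\<And>v. 0 \<le> (\<Sum>i\<in>insert p J. \<Sum>j\<in>insert p J. A i j * v i * v j)"
  shows "0 \<le> A p p"
    and "0 \<le> (\<Sum>i\<in>J. \<Sum>j\<in>J. A i j * v i * v j)"
    and "(\<Sum>j\<in>J. A p j * v j)\<^sup>2 \<le> A p p * (\<Sum>i\<in>J. \<Sum>j\<in>J. A i j * v i * v j)"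
proof -
  have form: "0 \<le> A p p * t\<^sup>2 + 2 * (\<Sum>j\<in>J. A p j * v j) * t + (\<Sum>i\<in>J. \<Sum>j\<in>J. A i j * v i * v j)"
    for v t
  proof -
    have "\<And>i. i \<in> J \<Longrightarrow> (v(p := t)) i = v i" using J by auto
    then show ?thesis
      using psd[of "v(p := t)"] quadratic_form_insert[where A = A and v = "v(p := t)", OF J sym] by simp
  qed
  show "0 \<le> A p p" using form[where v = "\<lambda>_. 0" and t = 1] by simp
  show "0 \<le> (\<Sum>i\<in>J. \<Sum>j\<in>J. A i j * v i * v j)" using form[where v = v and t = 0] by simp
  show "(\<Sum>j\<in>J. A p j * v j)\<^sup>2 \<le> A p p * (\<Sum>i\<in>J. \<Sum>j\<in>J. A i j * v i * v j)"
    by (rule quadratic_nonneg_imp_discriminant_le[OF \<open>0 \<le> A p p\<close> form])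
qed

text \<open>One step of a Cholesky factorisation: a decomposition of the Schur complement of the
  pivot \<open>p\<close> extends by the row \<open>A p \<cdot> / sqrt (A p p)\<close>.\<close>
lemma sum_of_squares_extend_pivot:
  fixes A w :: "'a \<Rightarrow> 'a \<Rightarrow> real"
  assumes "finite J" "p \<notin> J" and sym: "\<And>i. i \<in> J \<Longrightarrow> A i p = A p i" and "0 \<le> A p p"
    and w: "\<exists>w. \<forall>i\<in>J. \<forall>j\<in>J. A i j - A i p * A p j / A p p = (\<Sum>k\<in>J. w k i * w k j)"
    and row_zero: "\<And>j. j \<in> J \<Longrightarrow> A p p = 0 \<Longrightarrow> A p j = 0"
  shows "\<exists>w'. \<forall>i\<in>insert p J. \<forall>j\<in>insert p J. A i j = (\<Sum>k\<in>insert p J. w' k i * w' k j)"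
proof -
  define c where "c = A p p"
  define B where "B i j = A i j - A i p * A p j / c" for i j
  obtain w where w: "\<And>i j. i \<in> J \<Longrightarrow> j \<in> J \<Longrightarrow> B i j = (\<Sum>k\<in>J. w k i * w k j)"
    using w unfolding B_def c_def by blast
  have row: "A p p * A p j / c = A p j" if "j \<in> insert p J" for j
    using that row_zero by (cases "c = 0") (auto simp: c_def)
  define w' where "w' k i = (if k = p then A p i / sqrt c else if i = p then 0 else w k i)" for k i
  show ?thesis
  proof (intro exI ballI)
    fix i j
    assume ij: "i \<in> insert p J" "j \<in> insert p J"
    have "(\<Sum>k\<in>insert p J. w' k i * w' k j) = w' p i * w' p j + (\<Sum>k\<in>J. w' k i * w' k j)"
      using assms(1,2) by simp
    also have "w' p i * w' p j = A p i * A p j / c"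
      using assms(4) by (simp add: w'_def c_def)
    also have "(\<Sum>k\<in>J. w' k i * w' k j) = (if i = p \<or> j = p then 0 else B i j)"
    proof (cases "i = p \<or> j = p")
      case False
      then have "i \<in> J" "j \<in> J" using ij by auto
      moreover have "w' k i * w' k j = w k i * w k j" if "k \<in> J" for k
        using that assms(2) False by (auto simp: w'_def)
      ultimately show ?thesis using False w by simp
    qed (use assms(2) in \<open>auto simp: w'_def intro!: sum.neutral\<close>)
    also have "A p i * A p j / c + (if i = p \<or> j = p then 0 else B i j) = A i j"
    proof (cases "i = p")
      case True
      then show ?thesis using row[OF ij(2)] by simp
    next
      case False
      then have "i \<in> J" using ij by simp
      then show ?thesis using row[OF ij(1)] sym[of i] False by (auto simp: B_def mult.commute)
    qed
    finally show "A i j = (\<Sum>k\<in>insert p J. w' k i * w' k j)" by simp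
  qed
qed

lemma psd_form_sum_of_squares:
  fixes A :: "'a \<Rightarrow> 'a \<Rightarrow> real"
  assumes "finite I" and "\<And>i j. i \<in> I \<Longrightarrow> j \<in> I \<Longrightarrow> A i j = A j i"
    and "\<And>v. 0 \<le> (\<Sum>i\<in>I. \<Sum>j\<in>I. A i j * v i * v j)"
  shows "\<exists>w. \<forall>i\<in>I. \<forall>j\<in>I. A i j = (\<Sum>k\<in>I. w k i * w k j)"
  using assms
proof (induction I arbitrary: A rule: finite_induct)
  case empty
  then show ?case by simp
next
  case (insert p J)
  have sym: "\<And>i. i \<in> J \<Longrightarrow> A i p = A p i" using insert.prems(1) by blast
  note pivot = psd_form_pivot_bound[OF insert.hyps(1,2) sym insert.prems(2)]
  define c where "c = A p p"
  define B where "B i j = A i j - A i p * A p j / c" for i j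
  have "\<exists>w. \<forall>i\<in>J. \<forall>j\<in>J. B i j = (\<Sum>k\<in>J. w k i * w k j)"
  proof (rule insert.IH)
    show "B i j = B j i" if "i \<in> J" "j \<in> J" for i j
      using that insert.prems(1) sym by (simp add: B_def)
    show "0 \<le> (\<Sum>i\<in>J. \<Sum>j\<in>J. B i j * v i * v j)" for v
    proof -
      define s where "s = (\<Sum>j\<in>J. A p j * v j)"
      have "(\<Sum>i\<in>J. \<Sum>j\<in>J. B i j * v i * v j) = (\<Sum>i\<in>J. \<Sum>j\<in>J. A i j * v i * v j) - s\<^sup>2 / c"
        by (simp add: B_def s_def sym algebra_simps sum_subtractf sum_distrib_left
            sum_divide_distrib power2_eq_square cong: sum.cong)
      moreover have "s\<^sup>2 / c \<le> (\<Sum>i\<in>J. \<Sum>j\<in>J. A i j * v i * v j)"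
        using pivot(1) pivot(2)[of v] pivot(3)[of v] by (cases "c = 0") (simp_all add: c_def s_def field_simps)
      ultimately show ?thesis by simp
    qed
  qed
  moreover have "A p j = 0" if "j \<in> J" "c = 0" for j
  proof -
    define v where "v = (\<lambda>_. 0 :: real)(j := 1)"
    have "(\<Sum>k\<in>J. A p k * v k) = A p j"
      using that insert.hyps(1) by (simp add: v_def sum.remove[of J j])
    then have "(A p j)\<^sup>2 \<le> 0" using pivot(3)[of v] that by (simp add: c_def)
    then show ?thesis by simp
  qed
  ultimately show ?case
    using sum_of_squares_extend_pivot[where A = A and p = p and J = J] insert.hyps sym pivot(1)
    unfolding B_def c_def by blast
qed

lemma trace_psd_nsd_nonpos:
  fixes A M :: "'a \<Rightarrow> 'a \<Rightarrow> real"
  assumes I: "finite I" and symM: "\<And>i j. i \<in> I \<Longrightarrow> j \<in> I \<Longrightarrow> M i j = M j i"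
    and psdA: "\<And>v. 0 \<le> (\<Sum>i\<in>I. \<Sum>j\<in>I. A i j * v i * v j)"
    and nsdM: "\<And>v. (\<Sum>i\<in>I. \<Sum>j\<in>I. M i j * v i * v j) \<le> 0"
  shows "(\<Sum>i\<in>I. \<Sum>j\<in>I. A i j * M i j) \<le> 0"
proof -
  define S where "S i j = (A i j + A j i) / 2" for i j
  have S_sum: "(\<Sum>i\<in>I. \<Sum>j\<in>I. S i j * X i j)
      = ((\<Sum>i\<in>I. \<Sum>j\<in>I. A i j * X i j) + (\<Sum>i\<in>I. \<Sum>j\<in>I. A i j * X j i)) / 2" for X
  proof -
    have "(\<Sum>i\<in>I. \<Sum>j\<in>I. A j i * X i j) = (\<Sum>i\<in>I. \<Sum>j\<in>I. A i j * X j i)"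
      by (rule sum.swap)
    then show ?thesis
      by (simp add: S_def sum.distrib add_divide_distrib distrib_right flip: sum_divide_distrib)
  qed
  have "(\<Sum>i\<in>I. \<Sum>j\<in>I. S i j * v i * v j) = (\<Sum>i\<in>I. \<Sum>j\<in>I. A i j * v i * v j)" for v
    using S_sum[of "\<lambda>i j. v i * v j"] by (simp add: mult.assoc mult.commute[of "v _" "v _"])
  then obtain w where w: "\<And>i j. i \<in> I \<Longrightarrow> j \<in> I \<Longrightarrow> S i j = (\<Sum>k\<in>I. w k i * w k j)"
    using psd_form_sum_of_squares[OF I, of S] psdA by (force simp: S_def)
  have "(\<Sum>i\<in>I. \<Sum>j\<in>I. A i j * M i j) = (\<Sum>i\<in>I. \<Sum>j\<in>I. S i j * M i j)"
    using S_sum[of M] symM by (simp cong: sum.cong)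
  also have "\<dots> = (\<Sum>i\<in>I. \<Sum>j\<in>I. \<Sum>k\<in>I. M i j * w k i * w k j)"
    by (simp add: w sum_distrib_left sum_distrib_right mult_ac cong: sum.cong)
  also have "\<dots> = (\<Sum>i\<in>I. \<Sum>k\<in>I. \<Sum>j\<in>I. M i j * w k i * w k j)"
    by (rule sum.cong[OF refl], rule sum.swap)
  also have "\<dots> = (\<Sum>k\<in>I. \<Sum>i\<in>I. \<Sum>j\<in>I. M i j * w k i * w k j)"
    by (rule sum.swap)
  also have "\<dots> \<le> 0"
    by (intro sum_nonpos nsdM)
  finally show ?thesis .
qed

section \<open>Conditions at a maximum point\<close>

lemma DERIV_local_max_second:
  fixes h h' :: "real \<Rightarrow> real"
  assumes d: "0 < d"
    and h': "\<And>t. \<bar>t\<bar> < d \<Longrightarrow> (h has_real_derivative h' t) (at t)"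
    and h'': "(h' has_real_derivative c) (at 0)"
    and max: "\<And>t. \<bar>t\<bar> < d \<Longrightarrow> h t \<le> h 0"
  shows "h' 0 = 0" and "c \<le> 0"
proof -
  show crit: "h' 0 = 0"
    by (rule DERIV_local_max[OF h'[of 0] d]) (use d max in auto)
  show "c \<le> 0"
  proof (rule ccontr)
    assume "\<not> c \<le> 0"
    from DERIV_pos_inc_right[OF h''] this obtain e where
      e: "0 < e" "\<And>k. 0 < k \<Longrightarrow> k < e \<Longrightarrow> h' 0 < h' (0 + k)"
      by auto
    define t where "t = min e d / 2"
    have t: "0 < t" "t < e" "t < d" using e d by (auto simp: t_def)
    have "\<And>x. 0 \<le> x \<Longrightarrow> x \<le> t \<Longrightarrow> (h has_real_derivative h' x) (at x)"
      using t by (intro h') auto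
    from MVT2[OF t(1) this] obtain \<xi> where \<xi>: "0 < \<xi>" "\<xi> < t" "h t - h 0 = (t - 0) * h' \<xi>"
      by blast
    have "0 < h' \<xi>" using e(2)[of \<xi>] \<xi> t crit by auto
    then have "0 < t * h' \<xi>" using t(1) by simp
    then have "h 0 < h t" using \<xi>(3) by simp
    with max[of t] t show False by auto
  qed
qed

lemma max_point_along_line:
  fixes W \<psi> :: "real^'n \<Rightarrow> real" and Q Q' Q'' :: "real \<Rightarrow> real"
  assumes W: "C2 W" and \<psi>: "C2 \<psi>"
    and Q': "\<And>w. T < w \<Longrightarrow> (Q has_real_derivative Q' w) (at w)"
    and Q'': "\<And>w. T < w \<Longrightarrow> (Q' has_real_derivative Q'' w) (at w)"
    and z: "T < W z" and max: "\<And>x. Q (W x) - \<psi> x \<le> Q (W z) - \<psi> z"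
  shows "Q' (W z) * (\<Sum>j\<in>UNIV. v$j * pd1 W j z) = (\<Sum>j\<in>UNIV. v$j * pd1 \<psi> j z)"
    and "Q'' (W z) * (\<Sum>j\<in>UNIV. v$j * pd1 W j z)\<^sup>2 + Q' (W z) * (\<Sum>i\<in>UNIV. \<Sum>j\<in>UNIV. pd2 W i j z * v$i * v$j)
           \<le> (\<Sum>i\<in>UNIV. \<Sum>j\<in>UNIV. pd2 \<psi> i j z * v$i * v$j)"
proof -
  define w where "w t = W (z + t *\<^sub>R v)" for t
  define w' where "w' t = (\<Sum>j\<in>UNIV. v$j * pd1 W j (z + t *\<^sub>R v))" for t
  define p' where "p' t = (\<Sum>j\<in>UNIV. v$j * pd1 \<psi> j (z + t *\<^sub>R v))" for t
  define HW where "HW = (\<Sum>i\<in>UNIV. \<Sum>j\<in>UNIV. pd2 W i j z * v$i * v$j)"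
  define H\<psi> where "H\<psi> = (\<Sum>i\<in>UNIV. \<Sum>j\<in>UNIV. pd2 \<psi> i j z * v$i * v$j)"
  have dw: "(w has_real_derivative w' t) (at t)" and d\<psi>: "((\<lambda>t. \<psi> (z + t *\<^sub>R v)) has_real_derivative p' t) (at t)"
    and dw': "(w' has_real_derivative HW) (at 0)" and dp': "(p' has_real_derivative H\<psi>) (at 0)" for t
    unfolding w_def[abs_def] w'_def[abs_def] p'_def[abs_def] HW_def H\<psi>_def
    using C2_along_line[OF W] C2_along_line[OF \<psi>] by blast+
  have "(w \<longlongrightarrow> W z) (nhds 0)"
    using DERIV_isCont[OF dw, of 0] unfolding isCont_def tendsto_at_iff_tendsto_nhds by (simp add: w_def)
  then have "\<forall>\<^sub>F t in nhds 0. T < w t" using z by (rule order_tendstoD(1))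
  then obtain d where d: "0 < d" and wT: "\<And>t. \<bar>t\<bar> < d \<Longrightarrow> T < w t"
    unfolding eventually_nhds_metric dist_real_def by auto
  define h where "h t = Q (w t) - \<psi> (z + t *\<^sub>R v)" for t
  define h' where "h' t = Q' (w t) * w' t - p' t" for t
  have dh: "(h has_real_derivative h' t) (at t)" if "\<bar>t\<bar> < d" for t
    unfolding h_def h'_def
    by (intro derivative_intros DERIV_chain2[OF Q'[OF wT[OF that]] dw] d\<psi>)
  have "((\<lambda>t. Q' (w t)) has_real_derivative Q'' (W z) * w' 0) (at 0)"
    using DERIV_chain2[OF Q''[OF wT[of 0]] dw[of 0]] d by (simp add: w_def)
  then have dh': "(h' has_real_derivative Q'' (W z) * w' 0 * w' 0 + Q' (W z) * HW - H\<psi>) (at 0)"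
    unfolding h'_def using dw' dp' by (auto intro!: derivative_eq_intros simp: w_def)
  have "h t \<le> h 0" for t
    using max[of "z + t *\<^sub>R v"] by (simp add: h_def w_def)
  from DERIV_local_max_second[OF d dh dh' this]
  show "Q' (W z) * (\<Sum>j\<in>UNIV. v$j * pd1 W j z) = (\<Sum>j\<in>UNIV. v$j * pd1 \<psi> j z)"
    and "Q'' (W z) * (\<Sum>j\<in>UNIV. v$j * pd1 W j z)\<^sup>2 + Q' (W z) * HW \<le> H\<psi>"
    by (simp_all add: h'_def w_def w'_def p'_def power2_eq_square)
qed

lemma max_point_gradient:
  fixes W \<psi> :: "real^'n \<Rightarrow> real" and Q Q' Q'' :: "real \<Rightarrow> real"
  assumes "C2 W" "C2 \<psi>"
    and "\<And>w. T < w \<Longrightarrow> (Q has_real_derivative Q' w) (at w)"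
    and "\<And>w. T < w \<Longrightarrow> (Q' has_real_derivative Q'' w) (at w)"
    and "T < W z" "\<And>x. Q (W x) - \<psi> x \<le> Q (W z) - \<psi> z"
  shows "Q' (W z) * pd1 W j z = pd1 \<psi> j z"
  using max_point_along_line(1)[OF assms, of "axis j 1"] by (simp add: sum_axis_mult)

lemma max_point_trace_le:
  fixes W \<psi> :: "real^'n \<Rightarrow> real" and Q Q' Q'' :: "real \<Rightarrow> real" and A :: "'n \<Rightarrow> 'n \<Rightarrow> real"
  assumes W: "C2 W" and \<psi>: "C2 \<psi>"
    and "\<And>w. T < w \<Longrightarrow> (Q has_real_derivative Q' w) (at w)"
    and "\<And>w. T < w \<Longrightarrow> (Q' has_real_derivative Q'' w) (at w)"
    and "T < W z" "\<And>x. Q (W x) - \<psi> x \<le> Q (W z) - \<psi> z"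
    and A: "\<And>v. 0 \<le> (\<Sum>i\<in>UNIV. \<Sum>j\<in>UNIV. A i j * v$i * v$j)"
  shows "(\<Sum>i\<in>UNIV. \<Sum>j\<in>UNIV. A i j *
           (Q'' (W z) * pd1 W i z * pd1 W j z + Q' (W z) * pd2 W i j z - pd2 \<psi> i j z)) \<le> 0"
proof (rule trace_psd_nsd_nonpos)
  show "finite (UNIV :: 'n set)" by simp
  show "Q'' (W z) * pd1 W i z * pd1 W j z + Q' (W z) * pd2 W i j z - pd2 \<psi> i j z
      = Q'' (W z) * pd1 W j z * pd1 W i z + Q' (W z) * pd2 W j i z - pd2 \<psi> j i z" for i j
    using pd2_symmetric[OF W, of i j] pd2_symmetric[OF \<psi>, of i j] by simp
  show "0 \<le> (\<Sum>i\<in>UNIV. \<Sum>j\<in>UNIV. A i j * u i * u j)" for u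
    using A[of "\<chi> i. u i"] by simp
  show "(\<Sum>i\<in>UNIV. \<Sum>j\<in>UNIV.
          (Q'' (W z) * pd1 W i z * pd1 W j z + Q' (W z) * pd2 W i j z - pd2 \<psi> i j z) * u i * u j) \<le> 0" for u
  proof -
    have "(\<Sum>j\<in>UNIV. u j * pd1 W j z)\<^sup>2 = (\<Sum>i\<in>UNIV. \<Sum>j\<in>UNIV. pd1 W i z * pd1 W j z * u i * u j)"
      by (simp add: power2_eq_square sum_product mult_ac)
    then show ?thesis
      using max_point_along_line(2)[OF assms(1-6), of "\<chi> i. u i"]
      by (simp add: algebra_simps sum.distrib sum_subtractf sum_distrib_left)
  qed
qed

section \<open>The logarithmic penalty\<close>

definition penalty :: "real \<Rightarrow> real^'n \<Rightarrow> real" where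
  "penalty \<eta> x = \<eta> * ln (1 + x \<bullet> x)"

lemma one_plus_inner_self_pos: "0 < 1 + x \<bullet> x"
  by (simp add: add_pos_nonneg)

lemma has_derivative_penalty:
  "(penalty \<eta> has_derivative (\<lambda>h. \<eta> * (2 * (x \<bullet> h) / (1 + x \<bullet> x)))) (at x)"
  unfolding penalty_def using one_plus_inner_self_pos[of x]
  by (auto intro!: derivative_eq_intros simp: inner_commute field_simps)

lemma pd1_penalty: "pd1 (penalty \<eta>) j = (\<lambda>x. 2 * \<eta> * x$j / (1 + x \<bullet> x))"
  unfolding pd1_def frechet_derivative_at[OF has_derivative_penalty, symmetric]
  by (simp add: fun_eq_iff inner_axis)

lemma has_derivative_pd1_penalty:
  "((\<lambda>x::real^'n. 2 * \<eta> * x$j / (1 + x \<bullet> x)) has_derivative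
     (\<lambda>h. 2 * \<eta> * (h$j * (1 + x \<bullet> x) - x$j * (2 * (x \<bullet> h))) / (1 + x \<bullet> x)\<^sup>2)) (at x)"
proof -
  have "((\<lambda>x::real^'n. x$j) has_derivative (\<lambda>h. h$j)) (at x)"
    by (rule bounded_linear_imp_has_derivative) (rule bounded_linear_vec_nth)
  then show ?thesis
    using one_plus_inner_self_pos[of x]
    by (auto intro!: derivative_eq_intros simp: inner_commute field_simps power2_eq_square)
qed

lemma pd2_penalty:
  fixes x :: "real^'n"
  shows "pd2 (penalty \<eta>) i j x
    = 2 * \<eta> * ((if i = j then 1 else 0) * (1 + x \<bullet> x) - 2 * x$i * x$j) / (1 + x \<bullet> x)\<^sup>2"
proof -
  have "axis i 1 $ j = (if i = j then 1 else (0::real))" by (simp add: axis_def)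
  moreover have "x \<bullet> axis i 1 = x$i" by (simp add: inner_axis)
  ultimately show ?thesis
    unfolding pd2_def pd1_penalty frechet_derivative_at[OF has_derivative_pd1_penalty, symmetric]
    by (simp add: mult_ac)
qed

lemma sum_pd2_penalty:
  fixes A :: "'n::finite \<Rightarrow> 'n \<Rightarrow> real" and z :: "real^'n"
  shows "(\<Sum>i\<in>UNIV. \<Sum>j\<in>UNIV. A i j * pd2 (penalty \<eta>) i j z)
    = 2 * \<eta> / (1 + z \<bullet> z) * (\<Sum>i\<in>UNIV. A i i)
      - 4 * \<eta> / (1 + z \<bullet> z)\<^sup>2 * (\<Sum>i\<in>UNIV. \<Sum>j\<in>UNIV. A i j * z$i * z$j)"
proof -
  define \<rho> where "\<rho> = 1 + z \<bullet> z"
  have \<rho>: "0 < \<rho>" using one_plus_inner_self_pos by (simp add: \<rho>_def)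
  have "A i j * pd2 (penalty \<eta>) i j z
      = 2 * \<eta> / \<rho> * (if i = j then A i j else 0) - 4 * \<eta> / \<rho>\<^sup>2 * (A i j * z$i * z$j)" for i j
    using \<rho> by (cases "i = j") (simp_all add: pd2_penalty \<rho>_def[symmetric] field_simps power2_eq_square)
  then have "(\<Sum>i\<in>UNIV. \<Sum>j\<in>UNIV. A i j * pd2 (penalty \<eta>) i j z)
      = (\<Sum>i\<in>UNIV. \<Sum>j\<in>UNIV. 2 * \<eta> / \<rho> * (if i = j then A i j else 0)
          - 4 * \<eta> / \<rho>\<^sup>2 * (A i j * z$i * z$j))"
    by (simp only:)
  also have "\<dots> = 2 * \<eta> / \<rho> * (\<Sum>i\<in>UNIV. \<Sum>j\<in>UNIV. if i = j then A i j else 0)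
      - 4 * \<eta> / \<rho>\<^sup>2 * (\<Sum>i\<in>UNIV. \<Sum>j\<in>UNIV. A i j * z$i * z$j)"
    by (simp only: sum_subtractf sum_distrib_left)
  finally show ?thesis by (simp add: \<rho>_def)
qed

lemma C2_penalty: "C2 (penalty \<eta> :: real^'n \<Rightarrow> real)"
  unfolding C2_def
proof (intro conjI allI)
  show "penalty \<eta> differentiable at x" for x :: "real^'n"
    using has_derivative_penalty differentiable_def by blast
  show "pd1 (penalty \<eta>) j differentiable at x" for j and x :: "real^'n"
    unfolding pd1_penalty using has_derivative_pd1_penalty differentiable_def by blast
  show "continuous_on UNIV (pd2 (penalty \<eta>) i j)" for i j :: 'n
  proof -
    have "\<And>x::real^'n. 1 + x \<bullet> x \<noteq> 0" using one_plus_inner_self_pos by (metis less_irrefl)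
    then show ?thesis unfolding pd2_penalty by (intro continuous_intros) auto
  qed
qed

lemma continuous_attains_max_of_bounded_superlevel:
  fixes g :: "'a::heine_borel \<Rightarrow> real"
  assumes "continuous_on UNIV g" and "bounded {x. g x0 \<le> g x}"
  obtains z where "\<And>x. g x \<le> g z"
proof -
  have "compact {x. g x0 \<le> g x}"
    using assms by (simp add: compact_eq_bounded_closed closed_Collect_le)
  then obtain z where z: "g x0 \<le> g z" "\<And>x. g x0 \<le> g x \<Longrightarrow> g x \<le> g z"
    using continuous_attains_sup[of "{x. g x0 \<le> g x}" g] assms(1)
    by (force intro: continuous_on_subset)
  then show ?thesis using that by (meson linear order_trans)
qed

lemma exists_max_bounded_minus_penalty:
  fixes g :: "real^'n \<Rightarrow> real"
  assumes g: "continuous_on UNIV g" and g_le: "\<And>x. g x \<le> B" and \<eta>: "0 < \<eta>"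
  obtains z where "\<And>x. g x - penalty \<eta> x \<le> g z - penalty \<eta> z"
proof -
  define Z where "Z x = g x - penalty \<eta> x" for x
  have "continuous_on UNIV Z"
    unfolding Z_def using g C2_continuous_on[OF C2_penalty] by (intro continuous_intros)
  moreover have "bounded {x. Z 0 \<le> Z x}"
  proof -
    have "norm x \<le> sqrt (exp ((B - Z 0) / \<eta>))" if "Z 0 \<le> Z x" for x
    proof -
      have "\<eta> * ln (1 + x \<bullet> x) \<le> B - Z 0"
        using that g_le[of x] by (simp add: Z_def penalty_def)
      then have "ln (1 + x \<bullet> x) \<le> (B - Z 0) / \<eta>" using \<eta> by (simp add: field_simps)
      then have "1 + x \<bullet> x \<le> exp ((B - Z 0) / \<eta>)"
        using one_plus_inner_self_pos[of x] by (metis exp_le_cancel_iff exp_ln)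
      then have "(norm x)\<^sup>2 \<le> exp ((B - Z 0) / \<eta>)" by (simp add: power2_norm_eq_inner)
      then show ?thesis by (simp add: real_le_rsqrt)
    qed
    then show ?thesis unfolding bounded_iff by blast
  qed
  ultimately show ?thesis
    using continuous_attains_max_of_bounded_superlevel that unfolding Z_def by blast
qed

text \<open>Hypothesis (L-1) with its constant \<open>C\<close>; ellipticity is only used as nonnegativity of the form.\<close>
locale linear_growth_elliptic =
  fixes a :: "real^'n \<Rightarrow> 'n \<Rightarrow> 'n \<Rightarrow> real" and b :: "real^'n \<Rightarrow> real^'n" and C :: real
  assumes C_pos: "0 < C"
    and a_growth: "\<And>x \<nu>. (\<Sum>i\<in>UNIV. \<Sum>j\<in>UNIV. a x i j * \<nu>$i * \<nu>$j) \<le> C * (norm \<nu>)\<^sup>2 * (1 + (norm x)\<^sup>2)"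
    and b_growth: "\<And>x. norm (b x) \<le> C * (1 + norm x)"
    and a_nonneg: "\<And>x \<nu>. 0 \<le> (\<Sum>i\<in>UNIV. \<Sum>j\<in>UNIV. a x i j * \<nu>$i * \<nu>$j)"
begin

lemma diagonal_le: "a z k k \<le> C * (1 + z \<bullet> z)"
proof -
  have "(\<Sum>i\<in>UNIV. \<Sum>j\<in>UNIV. a z i j * axis k 1 $ i * axis k 1 $ j)
      = (\<Sum>i\<in>UNIV. axis k 1 $ i * (\<Sum>j\<in>UNIV. axis k 1 $ j * a z i j))"
    by (simp add: sum_distrib_left mult_ac)
  also have "\<dots> = a z k k" by (simp add: sum_axis_mult)
  finally have "(\<Sum>i\<in>UNIV. \<Sum>j\<in>UNIV. a z i j * axis k 1 $ i * axis k 1 $ j) = a z k k" .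
  then show ?thesis using a_growth[of z "axis k 1"] by (simp add: power2_norm_eq_inner)
qed

lemma sum_a_pd2_penalty_le:
  assumes "0 \<le> \<eta>"
  shows "(\<Sum>i\<in>UNIV. \<Sum>j\<in>UNIV. a z i j * pd2 (penalty \<eta>) i j z) \<le> \<eta> * (2 * C * CARD('n))"
proof -
  define \<rho> where "\<rho> = 1 + z \<bullet> z"
  have \<rho>: "1 \<le> \<rho>" by (simp add: \<rho>_def)
  have "(\<Sum>i\<in>UNIV. a z i i) \<le> CARD('n) * (C * \<rho>)"
    using sum_bounded_above[of UNIV "\<lambda>i. a z i i" "C * \<rho>"] diagonal_le by (simp add: \<rho>_def)
  then have "2 * \<eta> / \<rho> * (\<Sum>i\<in>UNIV. a z i i) \<le> 2 * \<eta> / \<rho> * (CARD('n) * (C * \<rho>))"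
    using assms \<rho> by (intro mult_left_mono) auto
  also have "\<dots> = \<eta> * (2 * C * CARD('n))"
    using \<rho> by (simp add: field_simps)
  finally have "2 * \<eta> / \<rho> * (\<Sum>i\<in>UNIV. a z i i) \<le> \<eta> * (2 * C * CARD('n))" .
  moreover have "0 \<le> 4 * \<eta> / \<rho>\<^sup>2 * (\<Sum>i\<in>UNIV. \<Sum>j\<in>UNIV. a z i j * z$i * z$j)"
    using assms a_nonneg by simp
  ultimately show ?thesis
    unfolding sum_pd2_penalty \<rho>_def by linarith
qed

lemma sum_b_pd1_penalty_le:
  assumes "0 \<le> \<eta>"
  shows "(\<Sum>i\<in>UNIV. b z $ i * pd1 (penalty \<eta>) i z) \<le> \<eta> * (4 * C)"
proof -
  define \<rho> where "\<rho> = 1 + z \<bullet> z"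
  have \<rho>: "1 \<le> \<rho>" by (simp add: \<rho>_def)
  have "b z \<bullet> z \<le> C * (1 + norm z) * norm z"
    using Cauchy_Schwarz_ineq2[of "b z" z] b_growth[of z] abs_ge_self[of "b z \<bullet> z"]
    by (meson mult_right_mono norm_ge_zero order_trans)
  also have "\<dots> \<le> 2 * C * \<rho>"
  proof -
    have "(1 + norm z) * norm z \<le> 2 * (1 + (norm z)\<^sup>2)"
      using sum_squares_ge_zero[of "norm z - 1/2" 0] by (simp add: power2_eq_square algebra_simps)
    then show ?thesis using C_pos by (simp add: \<rho>_def power2_norm_eq_inner mult.assoc mult_left_mono)
  qed
  finally have "2 * \<eta> / \<rho> * (b z \<bullet> z) \<le> 2 * \<eta> / \<rho> * (2 * C * \<rho>)"
    using assms \<rho> by (intro mult_left_mono) auto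
  moreover have "(\<Sum>i\<in>UNIV. b z $ i * pd1 (penalty \<eta>) i z) = 2 * \<eta> / \<rho> * (b z \<bullet> z)"
    by (simp add: pd1_penalty \<rho>_def inner_vec_def sum_distrib_left sum_divide_distrib mult_ac)
  ultimately show ?thesis using \<rho> by simp
qed

lemma Lop_penalty_le:
  assumes "0 \<le> \<eta>"
  shows "Lop a b (penalty \<eta>) z \<le> \<eta> * (2 * C * (CARD('n) + 2))"
proof -
  have "\<eta> * (2 * C * (CARD('n) + 2)) = \<eta> * (2 * C * CARD('n)) + \<eta> * (4 * C)"
    by (simp add: algebra_simps)
  then show ?thesis
    using sum_a_pd2_penalty_le[OF assms, of z] sum_b_pd1_penalty_le[OF assms, of z]
    unfolding Lop_def by linarith
qed

lemma penalty_gradient_form_le: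
  "(\<Sum>i\<in>UNIV. \<Sum>j\<in>UNIV. a z i j * pd1 (penalty \<eta>) i z * pd1 (penalty \<eta>) j z) \<le> 4 * C * \<eta>\<^sup>2"
proof -
  define \<rho> where "\<rho> = 1 + z \<bullet> z"
  have \<rho>: "0 < \<rho>" "z \<bullet> z \<le> \<rho>" by (simp_all add: \<rho>_def add_pos_nonneg)
  define v where "v = (2 * \<eta> / \<rho>) *\<^sub>R z"
  have "pd1 (penalty \<eta>) i z = v $ i" for i
    by (simp add: pd1_penalty v_def \<rho>_def)
  then have "(\<Sum>i\<in>UNIV. \<Sum>j\<in>UNIV. a z i j * pd1 (penalty \<eta>) i z * pd1 (penalty \<eta>) j z)
      = (\<Sum>i\<in>UNIV. \<Sum>j\<in>UNIV. a z i j * v$i * v$j)"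
    by simp
  also have "\<dots> \<le> C * (norm v)\<^sup>2 * \<rho>"
    using a_growth[of z v] by (simp add: \<rho>_def power2_norm_eq_inner)
  also have "(norm v)\<^sup>2 = (2 * \<eta> / \<rho>)\<^sup>2 * (z \<bullet> z)"
    by (simp only: v_def norm_scaleR power_mult_distrib power2_abs power2_norm_eq_inner)
  also have "C * ((2 * \<eta> / \<rho>)\<^sup>2 * (z \<bullet> z)) * \<rho> = 4 * C * \<eta>\<^sup>2 * ((z \<bullet> z) / \<rho>)"
    using \<rho>(1) by (simp add: power_divide power2_eq_square)
  also have "\<dots> \<le> 4 * C * \<eta>\<^sup>2"
    using \<rho> C_pos by (intro mult_left_le) (auto simp: field_simps)
  finally show ?thesis .
qed

lemma Lop_le_at_max_point:
  fixes W :: "real^'n \<Rightarrow> real"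
  assumes \<eta>: "0 \<le> \<eta>" and q1: "0 < q1"
    and grad: "\<And>j. q1 * pd1 W j z = pd1 (penalty \<eta>) j z"
    and trace: "(\<Sum>i\<in>UNIV. \<Sum>j\<in>UNIV. a z i j *
                 (q2 * pd1 W i z * pd1 W j z + q1 * pd2 W i j z - pd2 (penalty \<eta>) i j z)) \<le> 0"
  shows "q1 * Lop a b W z \<le> \<eta> * (2 * C * (CARD('n) + 2)) + \<bar>q2\<bar> * (4 * C * \<eta>\<^sup>2) / q1\<^sup>2"
proof -
  define G where "G = (\<Sum>i\<in>UNIV. \<Sum>j\<in>UNIV. a z i j * pd1 W i z * pd1 W j z)"
  define H where "H = (\<Sum>i\<in>UNIV. \<Sum>j\<in>UNIV. a z i j * (q1 * pd2 W i j z - pd2 (penalty \<eta>) i j z))"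
  have "(\<Sum>i\<in>UNIV. \<Sum>j\<in>UNIV. a z i j *
          (q2 * pd1 W i z * pd1 W j z + q1 * pd2 W i j z - pd2 (penalty \<eta>) i j z))
      = (\<Sum>i\<in>UNIV. \<Sum>j\<in>UNIV. q2 * (a z i j * pd1 W i z * pd1 W j z)
          + a z i j * (q1 * pd2 W i j z - pd2 (penalty \<eta>) i j z))"
    by (simp add: algebra_simps)
  also have "\<dots> = q2 * G + H"
    by (simp add: G_def H_def sum.distrib sum_distrib_left)
  finally have H: "H \<le> - q2 * G" using trace by linarith
  have "(\<Sum>i\<in>UNIV. b z $ i * (q1 * pd1 W i z)) = (\<Sum>i\<in>UNIV. b z $ i * pd1 (penalty \<eta>) i z)"
    by (simp add: grad)
  then have "q1 * Lop a b W z = Lop a b (penalty \<eta>) z + H"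
    unfolding Lop_def H_def
    by (simp add: algebra_simps sum_subtractf sum.distrib sum_distrib_left)
  also have "\<dots> \<le> \<eta> * (2 * C * (CARD('n) + 2)) + \<bar>q2\<bar> * G"
  proof -
    have "0 \<le> G" using a_nonneg[of z "\<chi> i. pd1 W i z"] by (simp add: G_def)
    then have "- q2 * G \<le> \<bar>q2\<bar> * G" by (intro mult_right_mono) auto
    then show ?thesis using H Lop_penalty_le[OF \<eta>, of z] by linarith
  qed
  also have "\<bar>q2\<bar> * G \<le> \<bar>q2\<bar> * (4 * C * \<eta>\<^sup>2) / q1\<^sup>2"
  proof -
    have "G = (\<Sum>i\<in>UNIV. \<Sum>j\<in>UNIV. a z i j * pd1 (penalty \<eta>) i z * pd1 (penalty \<eta>) j z) / q1\<^sup>2"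
      using q1 by (simp add: G_def flip: grad) (simp add: sum_divide_distrib power2_eq_square mult_ac)
    also have "\<dots> \<le> 4 * C * \<eta>\<^sup>2 / q1\<^sup>2"
      by (intro divide_right_mono penalty_gradient_form_le) simp
    finally show ?thesis by (simp add: mult_left_mono flip: times_divide_eq_right)
  qed
  finally show ?thesis by simp
qed

text \<open>Composing \<open>Q\<close> with \<open>max T\<close> makes \<open>Q \<circ> W\<close> continuous everywhere, and the choice of \<open>\<eta>\<close>
  keeps the maximum point in the region \<open>T < W\<close> where \<open>Q\<close> is differentiable.\<close>
lemma exists_point_Lop_le:
  fixes W :: "real^'n \<Rightarrow> real" and Q Q' Q'' :: "real \<Rightarrow> real"
  assumes W: "C2 W"
    and Q: "continuous_on {T..} Q"
    and Q': "\<And>w. T < w \<Longrightarrow> (Q has_real_derivative Q' w) (at w)"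
    and Q'': "\<And>w. T < w \<Longrightarrow> (Q' has_real_derivative Q'' w) (at w)"
    and Q'_pos: "\<And>w. T < w \<Longrightarrow> 0 < Q' w"
    and Q_le: "\<And>x. T \<le> W x \<Longrightarrow> Q (W x) \<le> B"
    and \<eta>: "0 < \<eta>"
    and x0: "T < W x0" "\<eta> * ln (1 + x0 \<bullet> x0) < Q (W x0) - Q T"
  obtains z where "T < W z"
    "Q' (W z) * Lop a b W z \<le> \<eta> * (2 * C * (CARD('n) + 2)) + \<bar>Q'' (W z)\<bar> * (4 * C * \<eta>\<^sup>2) / (Q' (W z))\<^sup>2"
proof -
  define R where "R w = Q (max T w)" for w
  have R_le: "R (W x) \<le> B" for x
  proof (cases "T \<le> W x")
    case False
    have "0 \<le> \<eta> * ln (1 + x0 \<bullet> x0)" using \<eta> by simp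
    then have "Q T \<le> B" using x0 Q_le[of x0] by linarith
    then show ?thesis using False by (simp add: R_def max_def)
  qed (simp add: R_def max_def Q_le)
  have "continuous_on UNIV R"
    unfolding R_def by (rule continuous_on_compose2[OF Q]) (auto intro!: continuous_intros)
  then have "continuous_on UNIV (\<lambda>x. R (W x))"
    using C2_continuous_on[OF W] by (auto intro: continuous_on_compose2)
  then obtain z where max: "\<And>x. R (W x) - penalty \<eta> x \<le> R (W z) - penalty \<eta> z"
    using exists_max_bounded_minus_penalty R_le \<eta> by blast
  have "T < W z"
  proof (rule ccontr)
    assume "\<not> T < W z"
    then have "R (W z) - penalty \<eta> z \<le> Q T" using \<eta> by (simp add: R_def penalty_def max_def)
    moreover have "Q T < R (W x0) - penalty \<eta> x0" using x0 by (simp add: R_def penalty_def)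
    ultimately show False using max[of x0] by simp
  qed
  have R': "(R has_real_derivative Q' w) (at w)" if "T < w" for w
    by (rule has_field_derivative_transform_within_open[OF Q'[OF that], of "{T<..}"])
      (use that in \<open>auto simp: R_def\<close>)
  show ?thesis
  proof (rule that[OF \<open>T < W z\<close>], rule Lop_le_at_max_point)
    show "0 \<le> \<eta>" "0 < Q' (W z)" using \<eta> Q'_pos \<open>T < W z\<close> by auto
    show "Q' (W z) * pd1 W j z = pd1 (penalty \<eta>) j z" for j
      by (rule max_point_gradient[OF W C2_penalty R' Q'' \<open>T < W z\<close> max])
    show "(\<Sum>i\<in>UNIV. \<Sum>j\<in>UNIV. a z i j * (Q'' (W z) * pd1 W i z * pd1 W j z
        + Q' (W z) * pd2 W i j z - pd2 (penalty \<eta>) i j z)) \<le> 0"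
      by (rule max_point_trace_le[OF W C2_penalty R' Q'' \<open>T < W z\<close> max a_nonneg])
  qed
qed

lemma eventually_exists_point_Lop_le:
  fixes W :: "real^'n \<Rightarrow> real" and Q Q' Q'' :: "real \<Rightarrow> real"
  assumes W: "C2 W"
    and Q: "continuous_on {T..} Q"
    and Q': "\<And>w. T < w \<Longrightarrow> (Q has_real_derivative Q' w) (at w)"
    and Q'': "\<And>w. T < w \<Longrightarrow> (Q' has_real_derivative Q'' w) (at w)"
    and Q'_pos: "\<And>w. T < w \<Longrightarrow> 0 < Q' w"
    and Q_le: "\<And>x. T \<le> W x \<Longrightarrow> Q (W x) \<le> B"
    and x0: "T < W x0"
  shows "\<forall>\<^sub>F \<eta> in at_right 0. \<exists>z. T < W z \<and>
    Q' (W z) * Lop a b W z \<le> \<eta> * (2 * C * (CARD('n) + 2)) + \<bar>Q'' (W z)\<bar> * (4 * C * \<eta>\<^sup>2) / (Q' (W z))\<^sup>2"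
proof -
  have "Q T < Q (W x0)"
    by (rule DERIV_pos_imp_increasing_open[OF x0])
      (use Q' Q'_pos in \<open>force intro: continuous_on_subset[OF Q]\<close>)+
  moreover have "((\<lambda>\<eta>. \<eta> * ln (1 + x0 \<bullet> x0)) \<longlongrightarrow> 0) (at_right 0)"
    by (auto intro!: tendsto_eq_intros)
  ultimately have "\<forall>\<^sub>F \<eta> in at_right 0. \<eta> * ln (1 + x0 \<bullet> x0) < Q (W x0) - Q T"
    by (intro order_tendstoD(2)) auto
  then show ?thesis using eventually_at_right_less[of 0]
  proof eventually_elim
    case (elim \<eta>)
    then show ?case
      using exists_point_Lop_le[OF W Q Q' Q'' Q'_pos Q_le _ x0] by blast
  qed
qed

end

section \<open>Iterated logarithms and the gauge\<close>

definition ln_iter_deriv :: "nat \<Rightarrow> real \<Rightarrow> real" where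
  "ln_iter_deriv k w = 1 / (\<Prod>i<k. (ln ^^ i) w)"

definition ln_iter_deriv2 :: "nat \<Rightarrow> real \<Rightarrow> real" where
  "ln_iter_deriv2 k w = - ln_iter_deriv k w * (\<Sum>i<k. ln_iter_deriv (Suc i) w)"

lemma ln_iter_deriv_Suc: "ln_iter_deriv (Suc k) = (\<lambda>w. ln_iter_deriv k w / (ln ^^ k) w)"
  by (simp add: fun_eq_iff ln_iter_deriv_def)

lemma ln_iter_deriv_pos:
  assumes "\<And>i. i < k \<Longrightarrow> 0 < (ln ^^ i) w"
  shows "0 < ln_iter_deriv k w"
  using assms unfolding ln_iter_deriv_def by (auto intro!: prod_pos)

lemma has_real_derivative_ln_iter:
  assumes "\<And>i. i < k \<Longrightarrow> 0 < (ln ^^ i) w"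
  shows "((ln ^^ k) has_real_derivative ln_iter_deriv k w) (at w)"
  using assms
proof (induction k)
  case 0
  then show ?case by (simp add: ln_iter_deriv_def)
next
  case (Suc k)
  have "((\<lambda>x. ln ((ln ^^ k) x)) has_real_derivative inverse ((ln ^^ k) w) * ln_iter_deriv k w) (at w)"
    using DERIV_chain2[OF DERIV_ln Suc.IH] Suc.prems by simp
  then show ?case by (simp add: ln_iter_deriv_Suc divide_inverse mult.commute)
qed

lemma has_real_derivative_ln_iter_deriv:
  assumes "\<And>i. i < k \<Longrightarrow> 0 < (ln ^^ i) w"
  shows "(ln_iter_deriv k has_real_derivative ln_iter_deriv2 k w) (at w)"
  unfolding ln_iter_deriv2_def using assms
proof (induction k)
  case 0
  then show ?case by (simp add: ln_iter_deriv_def[abs_def])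
next
  case (Suc k)
  have L: "0 < (ln ^^ k) w" and prems: "\<And>i. i < k \<Longrightarrow> 0 < (ln ^^ i) w" using Suc.prems by simp_all
  have "((\<lambda>x. ln_iter_deriv k x / (ln ^^ k) x) has_real_derivative
      (- ln_iter_deriv k w * (\<Sum>i<k. ln_iter_deriv (Suc i) w) * (ln ^^ k) w
        - ln_iter_deriv k w * ln_iter_deriv k w) / ((ln ^^ k) w * (ln ^^ k) w)) (at w)"
    using DERIV_divide[OF Suc.IH[OF prems] has_real_derivative_ln_iter[OF prems]] L by simp
  moreover have "(- ln_iter_deriv k w * (\<Sum>i<k. ln_iter_deriv (Suc i) w) * (ln ^^ k) w
        - ln_iter_deriv k w * ln_iter_deriv k w) / ((ln ^^ k) w * (ln ^^ k) w)
      = - ln_iter_deriv (Suc k) w * (\<Sum>i<Suc k. ln_iter_deriv (Suc i) w)"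
  proof -
    have "(- d * s * l - d * d) / (l * l) = - (d / l) * (s + d / l)" if "l \<noteq> 0" for d s l :: real
      using that by (simp add: field_simps)
    then show ?thesis using L by (simp add: ln_iter_deriv_Suc[of k])
  qed
  ultimately show ?case by (simp only: ln_iter_deriv_Suc[of k])
qed

lemma ln_iter_deriv_le:
  assumes "0 < k" and ge1: "\<And>i. i < k \<Longrightarrow> 1 \<le> (ln ^^ i) w"
  shows "w * ln_iter_deriv k w \<le> 1"
proof -
  have "{..<k} = insert 0 {1..<k}" using assms(1) by auto
  then have "(\<Prod>i<k. (ln ^^ i) w) = w * (\<Prod>i\<in>{1..<k}. (ln ^^ i) w)" by simp
  moreover have "1 \<le> (\<Prod>i\<in>{1..<k}. (ln ^^ i) w)" using ge1 by (intro prod_ge_1) auto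
  moreover have "1 \<le> w" using ge1[of 0] assms(1) by simp
  ultimately have "w * 1 \<le> (\<Prod>i<k. (ln ^^ i) w)" by (simp add: mult_left_mono)
  then show ?thesis
    using \<open>1 \<le> w\<close> by (simp add: ln_iter_deriv_def field_simps)
qed

lemma abs_ln_iter_deriv2_le:
  assumes ge1: "\<And>i. i < k \<Longrightarrow> 1 \<le> (ln ^^ i) w"
  shows "\<bar>ln_iter_deriv2 k w\<bar> \<le> k * ln_iter_deriv k w / w"
proof -
  have w: "1 \<le> w" if "0 < k" using ge1[of 0] that by simp
  have pos: "0 < (ln ^^ i) w" if "i < k" for i using ge1[OF that] by simp
  have "ln_iter_deriv (Suc i) w \<le> 1 / w" if "i < k" for i
  proof -
    have "w * ln_iter_deriv (Suc i) w \<le> 1"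
      by (rule ln_iter_deriv_le) (use ge1 that in auto)
    then show ?thesis using w that by (simp add: field_simps)
  qed
  then have S_le: "(\<Sum>i<k. ln_iter_deriv (Suc i) w) \<le> k * (1 / w)"
    using sum_bounded_above[of "{..<k}" "\<lambda>i. ln_iter_deriv (Suc i) w" "1 / w"] by simp
  have S_nonneg: "0 \<le> (\<Sum>i<k. ln_iter_deriv (Suc i) w)"
    by (intro sum_nonneg less_imp_le ln_iter_deriv_pos) (auto simp: less_Suc_eq intro: pos)
  have D_pos: "0 < ln_iter_deriv k w" by (intro ln_iter_deriv_pos pos)
  have "\<bar>- ln_iter_deriv k w * (\<Sum>i<k. ln_iter_deriv (Suc i) w)\<bar>
      = ln_iter_deriv k w * (\<Sum>i<k. ln_iter_deriv (Suc i) w)"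
    using S_nonneg D_pos by simp
  also have "\<dots> \<le> ln_iter_deriv k w * (k * (1 / w))"
    using S_le D_pos by (intro mult_left_mono) auto
  finally show ?thesis by (simp add: ln_iter_deriv2_def mult.commute)
qed

lemma filterlim_ln_iter_at_top: "filterlim (ln ^^ k :: real \<Rightarrow> real) at_top at_top"
proof (induction k)
  case (Suc k)
  show ?case using filterlim_compose[OF ln_at_top Suc.IH] by (simp add: o_def)
qed (simp add: filterlim_ident)

lemma eventually_ln_iter_ge_1: "\<forall>\<^sub>F w in at_top. \<forall>i\<le>N. (1::real) \<le> (ln ^^ i) w"
proof -
  have "\<forall>i\<in>{..N}. \<forall>\<^sub>F w in at_top. (1::real) \<le> (ln ^^ i) w"
    using filterlim_ln_iter_at_top unfolding filterlim_at_top by blast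
  then have "\<forall>\<^sub>F w in at_top. \<forall>i\<in>{..N}. (1::real) \<le> (ln ^^ i) w"
    by (rule eventually_ball_finite[rotated]) simp
  then show ?thesis by (auto elim!: eventually_mono)
qed

text \<open>\<open>L\<close>, \<open>D\<close>, \<open>D'\<close> stand for \<open>ln\<^sup>k w\<close> and its first two derivatives.\<close>
lemma powr_gauge_estimates:
  fixes \<kappa> L D D' w M :: real
  assumes \<kappa>: "0 < \<kappa>" and L: "1 \<le> L" and D: "0 < D" and w: "0 < w" and wD: "w * D \<le> 1"
    and D': "\<bar>D'\<bar> \<le> M * D / w"
  shows "1 \<le> L powr (\<kappa> + 1) / (w * D)"
    and "\<bar>\<kappa> * ((- \<kappa> - 1) * L powr (- \<kappa> - 2) * D\<^sup>2 + L powr (- \<kappa> - 1) * D')\<bar>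
           \<le> (\<kappa> + 1 + M) / \<kappa> * (L powr (\<kappa> + 1) / (w * D)) * (\<kappa> * L powr (- \<kappa> - 1) * D)\<^sup>2"
proof -
  define P where "P = L powr \<kappa>"
  have P: "1 \<le> P" using L \<kappa> by (simp add: P_def ge_one_powr_ge_zero)
  have L0: "0 < L" using L by simp
  have pow1: "L powr (\<kappa> + 1) = P * L"
    using L0 by (simp add: P_def powr_add)
  have pow2: "L powr (- \<kappa> - 1) = 1 / (P * L)" "L powr (- \<kappa> - 2) = 1 / (P * L * L)"
    using L0 by (simp_all add: P_def powr_diff powr_minus_divide powr_add[symmetric] power2_eq_square
        flip: powr_minus)
  have "1 * 1 \<le> P * L" using P L by (intro mult_mono) auto
  then have PL: "w * D \<le> P * L" using wD by simp
  then show "1 \<le> L powr (\<kappa> + 1) / (w * D)"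
    unfolding pow1 using w D by (simp add: field_simps)
  have "\<bar>(- \<kappa> - 1) * L powr (- \<kappa> - 2) * D\<^sup>2\<bar> = (\<kappa> + 1) * (D / (P * L)) * (D / L)"
    using \<kappa> P L0 by (simp add: pow2 abs_mult power2_eq_square)
  moreover have "\<bar>L powr (- \<kappa> - 1) * D'\<bar> = \<bar>D'\<bar> / (P * L)"
    using P L0 by (simp add: pow2 abs_mult)
  ultimately have "\<bar>\<kappa> * ((- \<kappa> - 1) * L powr (- \<kappa> - 2) * D\<^sup>2 + L powr (- \<kappa> - 1) * D')\<bar>
      \<le> \<kappa> * ((\<kappa> + 1) * (D / (P * L)) * (D / L) + \<bar>D'\<bar> / (P * L))"
    using \<kappa> abs_triangle_ineq[of "(- \<kappa> - 1) * L powr (- \<kappa> - 2) * D\<^sup>2" "L powr (- \<kappa> - 1) * D'"]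
    by (simp add: abs_mult mult_left_mono)
  also have "\<dots> \<le> \<kappa> * ((\<kappa> + 1) * (D / (P * L)) * (1 / w) + (M * D / w) / (P * L))"
  proof (intro mult_left_mono add_mono divide_right_mono)
    show "D / L \<le> 1 / w" using wD L w D by (simp add: field_simps)
  qed (use \<kappa> D P L0 D' in auto)
  also have "\<dots> = (\<kappa> + 1 + M) / \<kappa> * (P * L / (w * D)) * (\<kappa> * (1 / (P * L)) * D)\<^sup>2"
    using \<kappa> D P L0 w by (simp add: field_simps power2_eq_square)
  finally show "\<bar>\<kappa> * ((- \<kappa> - 1) * L powr (- \<kappa> - 2) * D\<^sup>2 + L powr (- \<kappa> - 1) * D')\<bar>
           \<le> (\<kappa> + 1 + M) / \<kappa> * (L powr (\<kappa> + 1) / (w * D)) * (\<kappa> * L powr (- \<kappa> - 1) * D)\<^sup>2"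
    by (simp only: pow1 pow2)
qed

text \<open>With \<open>k = m + 1\<close> and \<open>\<kappa> = \<epsilon> / 2\<close>, \<open>log_gauge' k \<kappa>\<close> times the denominator in (F-2')
  equals \<open>\<kappa> X\<close> with \<open>1 \<le> X\<close>, while \<open>\<bar>log_gauge'' k \<kappa>\<bar> / (log_gauge' k \<kappa>)\<^sup>2\<close> is \<open>O(X)\<close>
  (lemma \<open>log_gauge_estimates\<close>).\<close>
definition log_gauge :: "nat \<Rightarrow> real \<Rightarrow> real \<Rightarrow> real" where
  "log_gauge k \<kappa> w = - ((ln ^^ k) w powr (- \<kappa>))"

definition log_gauge' :: "nat \<Rightarrow> real \<Rightarrow> real \<Rightarrow> real" where
  "log_gauge' k \<kappa> w = \<kappa> * (ln ^^ k) w powr (- \<kappa> - 1) * ln_iter_deriv k w"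

definition log_gauge'' :: "nat \<Rightarrow> real \<Rightarrow> real \<Rightarrow> real" where
  "log_gauge'' k \<kappa> w = \<kappa> * ((- \<kappa> - 1) * (ln ^^ k) w powr (- \<kappa> - 2) * (ln_iter_deriv k w)\<^sup>2
                                + (ln ^^ k) w powr (- \<kappa> - 1) * ln_iter_deriv2 k w)"

lemma has_real_derivative_log_gauge:
  assumes pos: "\<And>i. i \<le> k \<Longrightarrow> 0 < (ln ^^ i) w"
  shows "(log_gauge k \<kappa> has_real_derivative log_gauge' k \<kappa> w) (at w)"
proof -
  have "((\<lambda>x. (ln ^^ k) x powr (- \<kappa>)) has_real_derivative
      (- \<kappa>) * (ln ^^ k) w powr (- \<kappa> - 1) * ln_iter_deriv k w) (at w)"
    using DERIV_fun_powr[OF has_real_derivative_ln_iter pos[of k], of "- \<kappa>"] pos by simp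
  from DERIV_minus[OF this] show ?thesis
    by (simp add: log_gauge_def[abs_def] log_gauge'_def)
qed

lemma has_real_derivative_log_gauge':
  assumes pos: "\<And>i. i \<le> k \<Longrightarrow> 0 < (ln ^^ i) w"
  shows "(log_gauge' k \<kappa> has_real_derivative log_gauge'' k \<kappa> w) (at w)"
proof -
  have "((\<lambda>x. (ln ^^ k) x powr (- \<kappa> - 1)) has_real_derivative
      (- \<kappa> - 1) * (ln ^^ k) w powr (- \<kappa> - 2) * ln_iter_deriv k w) (at w)"
    using DERIV_fun_powr[OF has_real_derivative_ln_iter pos[of k], of "- \<kappa> - 1"] pos
    by (simp add: diff_diff_eq)
  from DERIV_mult[OF DERIV_cmult[OF this, of \<kappa>] has_real_derivative_ln_iter_deriv] pos
  show ?thesis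
    by (simp add: log_gauge'_def[abs_def] log_gauge''_def power2_eq_square algebra_simps)
qed

lemma log_gauge'_pos:
  assumes "0 < \<kappa>" and "\<And>i. i \<le> k \<Longrightarrow> 0 < (ln ^^ i) w"
  shows "0 < log_gauge' k \<kappa> w"
proof -
  have "0 < (ln ^^ k) w" "0 < ln_iter_deriv k w"
    using assms(2) by (auto intro: ln_iter_deriv_pos)
  then show ?thesis unfolding log_gauge'_def using assms(1) by (intro mult_pos_pos) auto
qed

lemma log_gauge_nonpos: "log_gauge k \<kappa> w \<le> 0"
  by (simp add: log_gauge_def)

lemma log_gauge_estimates:
  assumes \<kappa>: "0 < \<kappa>" and k: "0 < k" and ge1: "\<And>i. i \<le> k \<Longrightarrow> 1 \<le> (ln ^^ i) w"
  defines "X \<equiv> (ln ^^ k) w powr (\<kappa> + 1) / (w * ln_iter_deriv k w)"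
  shows "1 \<le> X"
    and "\<bar>log_gauge'' k \<kappa> w\<bar> \<le> (\<kappa> + 1 + k) / \<kappa> * X * (log_gauge' k \<kappa> w)\<^sup>2"
    and "log_gauge' k \<kappa> w * (w * (\<Prod>i=1..<k. (ln ^^ i) w)\<^sup>2 * (ln ^^ k) w powr (2 + 2 * \<kappa>)) = \<kappa> * X"
proof -
  have w: "1 \<le> w" using ge1[of 0] by simp
  have pos: "0 < (ln ^^ i) w" if "i \<le> k" for i using ge1[OF that] by simp
  have D: "0 < ln_iter_deriv k w" by (rule ln_iter_deriv_pos) (simp add: pos)
  have wD: "w * ln_iter_deriv k w \<le> 1" by (rule ln_iter_deriv_le[OF k]) (use ge1 in auto)
  have D2: "\<bar>ln_iter_deriv2 k w\<bar> \<le> k * ln_iter_deriv k w / w"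
    using abs_ln_iter_deriv2_le[of k w] ge1 by simp
  note alg = powr_gauge_estimates[OF \<kappa> ge1[of k] D _ wD D2]
  show "1 \<le> X" unfolding X_def using alg(1) w by simp
  show "\<bar>log_gauge'' k \<kappa> w\<bar> \<le> (\<kappa> + 1 + k) / \<kappa> * X * (log_gauge' k \<kappa> w)\<^sup>2"
    unfolding X_def log_gauge''_def log_gauge'_def using alg(2) w by simp
  have "{..<k} = insert 0 {1..<k}" using k by auto
  then have "w * (\<Prod>i=1..<k. (ln ^^ i) w) = 1 / ln_iter_deriv k w"
    by (simp add: ln_iter_deriv_def)
  then have prod: "(\<Prod>i=1..<k. (ln ^^ i) w) = 1 / (w * ln_iter_deriv k w)"
    using w D by (simp add: field_simps)
  have "log_gauge' k \<kappa> w * (w * (\<Prod>i=1..<k. (ln ^^ i) w)\<^sup>2 * (ln ^^ k) w powr (2 + 2 * \<kappa>))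
      = \<kappa> * ((ln ^^ k) w powr (- \<kappa> - 1) * (ln ^^ k) w powr (2 + 2 * \<kappa>)) / (w * ln_iter_deriv k w)"
    unfolding log_gauge'_def prod using w D by (simp add: field_simps power2_eq_square)
  also have "(ln ^^ k) w powr (- \<kappa> - 1) * (ln ^^ k) w powr (2 + 2 * \<kappa>) = (ln ^^ k) w powr (\<kappa> + 1)"
    using ge1[of k] by (simp add: powr_add[symmetric] add.commute)
  finally show "log_gauge' k \<kappa> w * (w * (\<Prod>i=1..<k. (ln ^^ i) w)\<^sup>2 * (ln ^^ k) w powr (2 + 2 * \<kappa>)) = \<kappa> * X"
    by (simp add: X_def)
qed

lemma log_gauge_not_le:
  assumes \<kappa>: "0 < \<kappa>" and k: "0 < k" and ge1: "\<And>i. i \<le> k \<Longrightarrow> 1 \<le> (ln ^^ i) w"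
    and F: "F \<le> - (w * (\<Prod>i=1..<k. (ln ^^ i) w)\<^sup>2 * (ln ^^ k) w powr (2 + 2 * \<kappa>))"
    and small: "A < \<kappa> / 4" "E * ((\<kappa> + 1 + k) / \<kappa>) < \<kappa> / 4" and E: "0 \<le> E"
  shows "\<not> log_gauge' k \<kappa> w * - F \<le> A + \<bar>log_gauge'' k \<kappa> w\<bar> * E / (log_gauge' k \<kappa> w)\<^sup>2"
proof
  define X where "X = (ln ^^ k) w powr (\<kappa> + 1) / (w * ln_iter_deriv k w)"
  define c where "c = (\<kappa> + 1 + k) / \<kappa>"
  note est = log_gauge_estimates[OF \<kappa> k ge1, folded X_def c_def]
  have q1: "0 < log_gauge' k \<kappa> w"
    using ge1 by (intro log_gauge'_pos[OF \<kappa>]) (auto intro: less_le_trans[OF zero_less_one])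
  assume "log_gauge' k \<kappa> w * - F \<le> A + \<bar>log_gauge'' k \<kappa> w\<bar> * E / (log_gauge' k \<kappa> w)\<^sup>2"
  moreover have "\<kappa> * X \<le> log_gauge' k \<kappa> w * - F"
  proof -
    have "\<kappa> * X = log_gauge' k \<kappa> w * (w * (\<Prod>i=1..<k. (ln ^^ i) w)\<^sup>2 * (ln ^^ k) w powr (2 + 2 * \<kappa>))"
      using est(3) by simp
    also have "\<dots> \<le> log_gauge' k \<kappa> w * - F"
      using F q1 by (intro mult_left_mono) auto
    finally show ?thesis .
  qed
  moreover have "\<bar>log_gauge'' k \<kappa> w\<bar> * E / (log_gauge' k \<kappa> w)\<^sup>2 \<le> c * X * E"
  proof -
    have "\<bar>log_gauge'' k \<kappa> w\<bar> / (log_gauge' k \<kappa> w)\<^sup>2 \<le> c * X"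
      using est(2) q1 by (simp add: pos_divide_le_eq)
    then show ?thesis using E by (simp add: mult_right_mono flip: times_divide_eq_left)
  qed
  moreover have "\<kappa> \<le> \<kappa> * X" using est(1) \<kappa> by simp
  moreover have "4 * (c * X * E) < \<kappa> * X"
    using mult_strict_right_mono[OF small(2)[folded c_def], of X] est(1) by (simp add: field_simps)
  ultimately show False using small(1) \<kappa> by linarith
qed

lemma loc_lipschitz_imp_continuous_on:
  assumes "loc_lipschitz S g"
  shows "continuous_on S g"
  unfolding continuous_on_eq_continuous_within
proof
  fix x assume "x \<in> S"
  then obtain e L where e: "0 < e" and L: "L-lipschitz_on (cball x e \<inter> S) g"
    using assms unfolding loc_lipschitz_def by blast
  have "continuous (at x within cball x e \<inter> S) g"
    using lipschitz_on_continuous_within[OF L] \<open>x \<in> S\<close> e by simp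
  moreover have "at x within cball x e \<inter> S = at x within S"
    by (rule at_within_nhd[of x "ball x e"]) (use e in auto)
  ultimately show "continuous (at x within S) g" by simp
qed

lemma Fsup_le_Gsup:
  assumes f0: "\<And>x. f x 0 = 0"
    and bdd: "bdd_above ((\<lambda>p. f (fst p) (snd p) - f (fst p) (snd p - u)) ` {(x, v). u \<le> v})"
  shows "Fsup f u \<le> Gsup f u"
  unfolding Fsup_def
proof (rule cSUP_least)
  fix x
  have "f x u = f x u - f x (u - u)" using f0 by simp
  also have "\<dots> \<le> Gsup f u"
    unfolding Gsup_def using cSUP_upper[OF _ bdd, of "(x, u)"] by simp
  finally show "f x u \<le> Gsup f u" .
qed simp

lemma le_Fsup: "bdd_above (range (\<lambda>x. f x u)) \<Longrightarrow> f x u \<le> Fsup f u"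
  unfolding Fsup_def by (rule cSUP_upper) simp_all

context linear_growth_elliptic
begin

lemma eventually_exists_point_Fsup_le:
  fixes W :: "real^'n \<Rightarrow> real" and Q Q' Q'' :: "real \<Rightarrow> real"
  assumes W: "C2 W" and eq: "\<And>x. Lop a b W x + f x (W x) = 0" and W_nonneg: "\<And>x. 0 \<le> W x"
    and F_bdd: "\<And>u. 0 \<le> u \<Longrightarrow> bdd_above (range (\<lambda>x. f x u))"
    and Q: "continuous_on {T..} Q"
    and Q': "\<And>w. T < w \<Longrightarrow> (Q has_real_derivative Q' w) (at w)"
    and Q'': "\<And>w. T < w \<Longrightarrow> (Q' has_real_derivative Q'' w) (at w)"
    and Q'_pos: "\<And>w. T < w \<Longrightarrow> 0 < Q' w"
    and Q_le: "\<And>x. T \<le> W x \<Longrightarrow> Q (W x) \<le> B"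
    and x0: "T < W x0"
  shows "\<forall>\<^sub>F \<eta> in at_right 0. \<exists>z. T < W z \<and>
    Q' (W z) * - Fsup f (W z) \<le> \<eta> * (2 * C * (CARD('n) + 2)) + \<bar>Q'' (W z)\<bar> * (4 * C * \<eta>\<^sup>2) / (Q' (W z))\<^sup>2"
proof -
  have "\<forall>\<^sub>F \<eta> in at_right 0. \<exists>z. T < W z \<and> Q' (W z) * Lop a b W z
      \<le> \<eta> * (2 * C * (CARD('n) + 2)) + \<bar>Q'' (W z)\<bar> * (4 * C * \<eta>\<^sup>2) / (Q' (W z))\<^sup>2"
    by (rule eventually_exists_point_Lop_le[OF W Q Q' Q'' Q'_pos Q_le x0])
  then show ?thesis
  proof eventually_elim
    case (elim \<eta>)
    then obtain z where z: "T < W z" "Q' (W z) * Lop a b W z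
        \<le> \<eta> * (2 * C * (CARD('n) + 2)) + \<bar>Q'' (W z)\<bar> * (4 * C * \<eta>\<^sup>2) / (Q' (W z))\<^sup>2"
      by blast
    have "- Fsup f (W z) \<le> Lop a b W z"
      using le_Fsup[where f = f and u = "W z" and x = z, OF F_bdd[OF W_nonneg]] eq[of z] by simp
    then have "Q' (W z) * - Fsup f (W z) \<le> Q' (W z) * Lop a b W z"
      using Q'_pos[OF z(1)] by (intro mult_left_mono) auto
    then show ?case using z by force
  qed
qed

lemma solution_le_of_log_gauge:
  fixes W :: "real^'n \<Rightarrow> real"
  assumes W: "C2 W" and eq: "\<And>x. Lop a b W x + f x (W x) = 0" and W_nonneg: "\<And>x. 0 \<le> W x"
    and F_bdd: "\<And>u. 0 \<le> u \<Longrightarrow> bdd_above (range (\<lambda>x. f x u))"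
    and \<kappa>: "0 < \<kappa>" and k: "0 < k"
    and F_le: "\<And>w. T \<le> w \<Longrightarrow> Fsup f w \<le> - (w * (\<Prod>i=1..<k. (ln ^^ i) w)\<^sup>2 * (ln ^^ k) w powr (2 + 2 * \<kappa>))"
    and ge1: "\<And>w i. T \<le> w \<Longrightarrow> i \<le> k \<Longrightarrow> 1 \<le> (ln ^^ i) w"
  shows "W x \<le> T"
proof (rule ccontr)
  assume "\<not> W x \<le> T"
  then have x: "T < W x" by simp
  have pos: "\<And>w i. T \<le> w \<Longrightarrow> i \<le> k \<Longrightarrow> 0 < (ln ^^ i) w"
    using ge1 by (meson less_le_trans zero_less_one)
  have Q: "continuous_on {T..} (log_gauge k \<kappa>)"
    using has_real_derivative_log_gauge[OF pos]
    by (intro continuous_at_imp_continuous_on) (auto intro: DERIV_isCont)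
  have Q': "(log_gauge k \<kappa> has_real_derivative log_gauge' k \<kappa> w) (at w)"
    and Q'': "(log_gauge' k \<kappa> has_real_derivative log_gauge'' k \<kappa> w) (at w)"
    and Q'_pos: "0 < log_gauge' k \<kappa> w" if "T < w" for w
    using has_real_derivative_log_gauge has_real_derivative_log_gauge' log_gauge'_pos[OF \<kappa>]
      pos that by auto
  define K where "K = 2 * C * (CARD('n) + 2)"
  have "\<forall>\<^sub>F \<eta> in at_right 0. \<eta> * K < \<kappa> / 4 \<and> 4 * C * \<eta>\<^sup>2 * ((\<kappa> + 1 + k) / \<kappa>) < \<kappa> / 4"
    using \<kappa> by (intro eventually_conj order_tendstoD(2)) (auto intro!: tendsto_eq_intros)
  moreover have "\<forall>\<^sub>F \<eta> in at_right 0. \<exists>z. T < W z \<and> log_gauge' k \<kappa> (W z) * - Fsup f (W z)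
      \<le> \<eta> * K + \<bar>log_gauge'' k \<kappa> (W z)\<bar> * (4 * C * \<eta>\<^sup>2) / (log_gauge' k \<kappa> (W z))\<^sup>2"
    unfolding K_def
    by (rule eventually_exists_point_Fsup_le[OF W eq W_nonneg F_bdd Q Q' Q'' Q'_pos log_gauge_nonpos x])
  ultimately have "\<forall>\<^sub>F \<eta> in at_right 0. (\<eta> * K < \<kappa> / 4 \<and> 4 * C * \<eta>\<^sup>2 * ((\<kappa> + 1 + k) / \<kappa>) < \<kappa> / 4) \<and>
      (\<exists>z. T < W z \<and> log_gauge' k \<kappa> (W z) * - Fsup f (W z)
        \<le> \<eta> * K + \<bar>log_gauge'' k \<kappa> (W z)\<bar> * (4 * C * \<eta>\<^sup>2) / (log_gauge' k \<kappa> (W z))\<^sup>2)"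
    by (rule eventually_conj)
  then obtain \<eta> z where "\<eta> * K < \<kappa> / 4" "4 * C * \<eta>\<^sup>2 * ((\<kappa> + 1 + k) / \<kappa>) < \<kappa> / 4" "T < W z"
    and "log_gauge' k \<kappa> (W z) * - Fsup f (W z)
          \<le> \<eta> * K + \<bar>log_gauge'' k \<kappa> (W z)\<bar> * (4 * C * \<eta>\<^sup>2) / (log_gauge' k \<kappa> (W z))\<^sup>2"
    using eventually_happens'[OF trivial_limit_at_right_real] by blast
  with log_gauge_not_le[OF \<kappa> k ge1 F_le] C_pos show False by force
qed

lemma solution_bounded:
  fixes W :: "real^'n \<Rightarrow> real"
  assumes W: "C2 W" and eq: "\<And>x. Lop a b W x + f x (W x) = 0" and W_nonneg: "\<And>x. 0 \<le> W x"
    and F_bdd: "\<And>u. 0 \<le> u \<Longrightarrow> bdd_above (range (\<lambda>x. f x u))"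
    and F2: "F2' f"
  shows "bdd_above (range W)"
proof -
  obtain m :: nat and \<epsilon> :: real where \<epsilon>: "0 < \<epsilon>"
    and lim: "filterlim (\<lambda>u. Fsup f u / (u * (\<Prod>i=1..m. (ln ^^ i) u)\<^sup>2 * ((ln ^^ (m+1)) u) powr (2+\<epsilon>)))
                at_bot at_top"
    using F2 unfolding F2'_def by blast
  define den where "den u = u * (\<Prod>i=1..<Suc m. (ln ^^ i) u)\<^sup>2 * (ln ^^ Suc m) u powr (2 + 2 * (\<epsilon> / 2))"
    for u
  have "\<forall>\<^sub>F w in at_top. Fsup f w / den w \<le> -1"
    using lim unfolding filterlim_at_bot den_def by (simp add: atLeastLessThanSuc_atLeastAtMost)
  from eventually_conj[OF this eventually_ln_iter_ge_1[of "Suc m"]] obtain T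
    where T: "\<And>w. T \<le> w \<Longrightarrow> Fsup f w / den w \<le> -1 \<and> (\<forall>i\<le>Suc m. 1 \<le> (ln ^^ i) w)"
    unfolding eventually_at_top_linorder by blast
  have "0 < den w" if "T \<le> w" for w
  proof -
    have ge1: "\<And>i. i \<le> Suc m \<Longrightarrow> 1 \<le> (ln ^^ i) w" using T[OF that] by simp
    then have "0 < (\<Prod>i=1..<Suc m. (ln ^^ i) w)"
      by (intro prod_pos) (auto intro: less_le_trans[OF zero_less_one])
    then show ?thesis using ge1[of 0] ge1[of "Suc m"] by (simp add: den_def)
  qed
  then have "W x \<le> T" for x
    using T \<epsilon> by (intro solution_le_of_log_gauge[OF W eq W_nonneg F_bdd, of "\<epsilon> / 2" "Suc m"])
      (auto simp: pos_divide_le_eq den_def)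
  then show ?thesis by (intro bdd_aboveI2)
qed

lemma bounded_solution_eq_0:
  fixes W :: "real^'n \<Rightarrow> real"
  assumes W: "C2 W" and eq: "\<And>x. Lop a b W x + f x (W x) = 0" and W_nonneg: "\<And>x. 0 \<le> W x"
    and F_bdd: "\<And>u. 0 \<le> u \<Longrightarrow> bdd_above (range (\<lambda>x. f x u))"
    and F_neg: "\<And>u. 0 < u \<Longrightarrow> Fsup f u < 0" and F_cont: "continuous_on {0..} (Fsup f)"
    and bdd: "bdd_above (range W)"
  shows "W x = 0"
proof (rule ccontr)
  assume "W x \<noteq> 0"
  then have x: "0 < W x" using W_nonneg[of x] by simp
  obtain B where B: "\<And>y. W y \<le> B" using bdd by (auto simp: bdd_above_def)
  define c where "c = W x / 2"
  have c: "0 < c" "c < W x" using x by (auto simp: c_def)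
  have "continuous_on {c..B} (Fsup f)" using F_cont by (rule continuous_on_subset) (use c in auto)
  then obtain u where u: "u \<in> {c..B}" and u_max: "\<And>v. v \<in> {c..B} \<Longrightarrow> Fsup f v \<le> Fsup f u"
    using continuous_attains_sup[of "{c..B}" "Fsup f"] c B[of x] by fastforce
  have \<delta>: "0 < - Fsup f u" using F_neg[of u] u c by simp
  define K where "K = 2 * C * (CARD('n) + 2)"
  have "\<forall>\<^sub>F \<eta> in at_right 0. \<eta> * K < - Fsup f u"
    using \<delta> by (intro order_tendstoD(2)) (auto intro!: tendsto_eq_intros)
  moreover have "\<forall>\<^sub>F \<eta> in at_right 0. \<exists>z. c < W z \<and>
      1 * - Fsup f (W z) \<le> \<eta> * K + \<bar>0\<bar> * (4 * C * \<eta>\<^sup>2) / 1\<^sup>2"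
    unfolding K_def
    by (rule eventually_exists_point_Fsup_le[where Q = "\<lambda>w. w" and B = B, OF W eq W_nonneg F_bdd _ _ _ _ _ c(2)])
      (auto intro: continuous_on_id DERIV_ident DERIV_const B c)
  ultimately have "\<forall>\<^sub>F \<eta> in at_right 0. \<eta> * K < - Fsup f u \<and> (\<exists>z. c < W z \<and> - Fsup f (W z) \<le> \<eta> * K)"
    by eventually_elim simp
  then obtain \<eta> z where "\<eta> * K < - Fsup f u" "c < W z" "- Fsup f (W z) \<le> \<eta> * K"
    using eventually_happens'[OF trivial_limit_at_right_real] by blast
  moreover have "Fsup f (W z) \<le> Fsup f u" using u_max[of "W z"] B[of z] \<open>c < W z\<close> by simp
  ultimately show False by linarith
qed

lemma solution_eq_0:
  assumes sol: "stat_sol a b f W"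
    and F_bdd: "\<And>u. 0 \<le> u \<Longrightarrow> bdd_above (range (\<lambda>x. f x u))"
    and F2: "F2' f" and F3: "F3 f" and F_neg: "\<And>u. 0 < u \<Longrightarrow> Fsup f u < 0"
  shows "W x = 0"
proof -
  have W: "C2 W" and W_nonneg: "\<And>x. 0 \<le> W x" and eq: "\<And>x. Lop a b W x + f x (W x) = 0"
    using sol unfolding stat_sol_def by blast+
  have "continuous_on {0..} (Fsup f)"
    using F3 unfolding F3_def by (blast intro: loc_lipschitz_imp_continuous_on)
  then show ?thesis
    using bounded_solution_eq_0[OF W eq W_nonneg F_bdd F_neg _ solution_bounded[OF W eq W_nonneg F_bdd F2]]
    by blast
qed

end

lemma L1_elliptic_imp_linear_growth_elliptic:
  assumes "L1 a b" and elliptic: "\<And>x \<nu>. \<nu> \<noteq> 0 \<Longrightarrow> (\<Sum>i\<in>UNIV. \<Sum>j\<in>UNIV. a x i j * \<nu>$i * \<nu>$j) > 0"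
  obtains C where "linear_growth_elliptic a b C"
proof -
  obtain C where "0 < C"
    and "\<And>x \<nu>. (\<Sum>i\<in>UNIV. \<Sum>j\<in>UNIV. a x i j * \<nu>$i * \<nu>$j) \<le> C * (norm \<nu>)\<^sup>2 * (1 + (norm x)\<^sup>2)"
    and "\<And>x. norm (b x) \<le> C * (1 + norm x)"
    using assms(1) unfolding L1_def by blast
  moreover have "0 \<le> (\<Sum>i\<in>UNIV. \<Sum>j\<in>UNIV. a x i j * \<nu>$i * \<nu>$j)" for x \<nu>
    using elliptic[of \<nu> x] by (cases "\<nu> = 0") auto
  ultimately have "linear_growth_elliptic a b C" unfolding linear_growth_elliptic_def by blast
  then show ?thesis by (rule that)
qed

theorem theorem5:
  fixes a :: "real^'n \<Rightarrow> 'n \<Rightarrow> 'n \<Rightarrow> real"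
    and b :: "real^'n \<Rightarrow> real^'n"
    and f :: "real^'n \<Rightarrow> real \<Rightarrow> real"
    and \<alpha> :: real
  assumes alpha: "0 < \<alpha>" "\<alpha> < 1"
    and holder_a: "\<And>i j. holder \<alpha> (\<lambda>x. a x i j)"
    and holder_b: "\<And>i. holder \<alpha> (\<lambda>x. b x $ i)"
    and elliptic: "\<And>x \<nu>. \<nu> \<noteq> 0 \<Longrightarrow> (\<Sum>i\<in>UNIV. \<Sum>j\<in>UNIV. a x i j * \<nu>$i * \<nu>$j) > 0"
    and f_lip: "loc_lipschitz (UNIV \<times> {0..}) (\<lambda>(x, u). f x u)"
    and F_fin: "\<And>u. u \<ge> 0 \<Longrightarrow> bdd_above (range (\<lambda>x. f x u))"
  shows "(F1' f \<and> F2' f \<and> F3 f \<and> F4a f \<and> L1 a b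
           \<and> (\<forall>u\<ge>0. bdd_above ((\<lambda>p. f (fst p) (snd p) - f (fst p) (snd p - u)) ` {(x,v). v \<ge> u}))
           \<and> (\<forall>u>0. Gsup f u < 0)
           \<longrightarrow> (\<forall>W. stat_sol a b f W \<longrightarrow> (\<forall>x. W x = 0)))
       \<and> ((\<forall>x. concave_on {0..} (f x)) \<and> (\<forall>u>0. Fsup f u < 0) \<and> F2' f \<and> F3 f \<and> L1 a b
           \<longrightarrow> (\<forall>W. stat_sol a b f W \<longrightarrow> (\<forall>x. W x = 0)))"
proof -
  have vanishing: "\<forall>W. stat_sol a b f W \<longrightarrow> (\<forall>x. W x = 0)"
    if L1: "L1 a b" and F: "F2' f" "F3 f" "\<And>u. 0 < u \<Longrightarrow> Fsup f u < 0"
  proof -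
    obtain C where "linear_growth_elliptic a b C"
      using L1_elliptic_imp_linear_growth_elliptic[OF L1 elliptic] .
    then show ?thesis using linear_growth_elliptic.solution_eq_0 F_fin F by blast
  qed
  have "Fsup f u < 0"
    if "F3 f" "\<forall>u\<ge>0. bdd_above ((\<lambda>p. f (fst p) (snd p) - f (fst p) (snd p - u)) ` {(x,v). v \<ge> u})"
      "\<forall>u>0. Gsup f u < 0" "0 < u" for u
    using Fsup_le_Gsup[of f u] that unfolding F3_def by force
  then show ?thesis using vanishing by blast
qed

end
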